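(* Let $\mathbf x\in\mathbb F^6$ have at most one nonzero coordinate. Then $\mathcal O_{\mathbf x}$ is regular in arity $4$ if and only if either $\mathbf x=(1,0,0,0,0,0)$ (the associative relation $(a_1a_2)a_3=a_1(a_2a_3)$) or $\mathbf x=(0,0,0,0,s,0)$ with $s\neq\pm1$ (the relation $(a_1a_2)a_3=s\,a_3(a_1a_2)$, which for $s=0$ is the left-nilpotent relation $(a_1a_2)a_3=0$).
   Context: Let $\mathbb F$ be a field of characteristic $0$. Let $\mathcal T$ be the free symmetric operad over $\mathbb F$ generated by one binary operation $(a_1,a_2)\mapsto a_1a_2$ with no symmetry; its arity-$n$ component $\mathcal T(n)$ is the vector space with basis all multilinear bracketed (nonassociative) monomials in $a_1,\dots,a_n$, with the right $S_n$-action permuting arguments. For $\mathbf x=(x_1,\dots,x_6)\in\mathbb F^6$, $\mathcal O_{\mathbf x}$ denotes the quotient of $\mathcal T$ by the operad ideal $\mathcal J_{\mathbf x}$ generated by the relation (LR): $(a_1a_2)a_3 = x_1a_1(a_2a_3)+x_2a_1(a_3a_2)+x_3a_2(a_1a_3)+x_4a_2(a_3a_1)+x_5a_3(a_1a_2)+x_6a_3(a_2a_1)$. $\mathcal O_{\mathbf x}$ is regular in arity $4$ if $\mathcal O_{\mathbf x}(4)\cong\mathbb FS_4$ as $S_4$-modules. *)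

theory Defs
  imports "HOL-Combinatorics.Permutations"
begin

text \<open>Bracketed nonassociative monomials; leaves are labelled by natural numbers
  (label i stands for the argument a_i).\<close>
datatype tree = Leaf nat | Node tree tree

fun leaves :: "tree \<Rightarrow> nat list" where
  "leaves (Leaf i) = [i]"
| "leaves (Node l r) = leaves l @ leaves r"

fun relabel :: "(nat \<Rightarrow> nat) \<Rightarrow> tree \<Rightarrow> tree" where
  "relabel f (Leaf i) = Leaf (f i)"
| "relabel f (Node l r) = Node (relabel f l) (relabel f r)"

definition basis4 :: "tree set" where
  "basis4 = {t. distinct (leaves t) \<and> set (leaves t) = {1..4}}"

text \<open>Vectors are coefficient functions on monomials; T(4) = those supported on basis4.\<close>
definition T4 :: "(tree \<Rightarrow> 'a::field) set" where
  "T4 = {v. \<forall>t. v t \<noteq> 0 \<longrightarrow> t \<in> basis4}"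

definition unitv :: "tree \<Rightarrow> tree \<Rightarrow> 'a::field" where
  "unitv t = (\<lambda>s. if s = t then 1 else 0)"

text \<open>Bilinear extension of the generating binary operation (free nonassociative product).\<close>
definition tmul :: "(tree \<Rightarrow> 'a::field) \<Rightarrow> (tree \<Rightarrow> 'a) \<Rightarrow> tree \<Rightarrow> 'a" where
  "tmul p q = (\<lambda>t. case t of Leaf _ \<Rightarrow> 0 | Node l r \<Rightarrow> p l * q r)"

definition LR :: "'a::field \<Rightarrow> 'a \<Rightarrow> 'a \<Rightarrow> 'a \<Rightarrow> 'a \<Rightarrow> 'a \<Rightarrow>
    (tree \<Rightarrow> 'a) \<Rightarrow> (tree \<Rightarrow> 'a) \<Rightarrow> (tree \<Rightarrow> 'a) \<Rightarrow> tree \<Rightarrow> 'a" where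
  "LR x1 x2 x3 x4 x5 x6 p q s = (\<lambda>t.
      tmul (tmul p q) s t - x1 * tmul p (tmul q s) t - x2 * tmul p (tmul s q) t
      - x3 * tmul q (tmul p s) t - x4 * tmul q (tmul s p) t
      - x5 * tmul s (tmul p q) t - x6 * tmul s (tmul q p) t)"

definition gen :: "nat \<Rightarrow> tree \<Rightarrow> 'a::field" where
  "gen i = unitv (Leaf i)"

text \<open>Spanning set of the arity-4 component J(4) of the operad ideal generated by (LR):
  all compositions of the relation with the generating operation (mu o_i r and r o_i mu),
  with all labellings of the four arguments (i.e. closed under S_4).\<close>
definition J4gens :: "'a::field \<Rightarrow> 'a \<Rightarrow> 'a \<Rightarrow> 'a \<Rightarrow> 'a \<Rightarrow> 'a \<Rightarrow> (tree \<Rightarrow> 'a) set" where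
  "J4gens x1 x2 x3 x4 x5 x6 = (\<Union>(a,b,c,d) \<in> {(a,b,c,d). distinct [a,b,c,d] \<and> set [a,b,c,d] = {1..4::nat}}.
     { tmul (LR x1 x2 x3 x4 x5 x6 (gen a) (gen b) (gen c)) (gen d),
       tmul (gen d) (LR x1 x2 x3 x4 x5 x6 (gen a) (gen b) (gen c)),
       LR x1 x2 x3 x4 x5 x6 (tmul (gen a) (gen b)) (gen c) (gen d),
       LR x1 x2 x3 x4 x5 x6 (gen a) (tmul (gen b) (gen c)) (gen d),
       LR x1 x2 x3 x4 x5 x6 (gen a) (gen b) (tmul (gen c) (gen d)) })"

definition lin_span :: "(tree \<Rightarrow> 'a::field) set \<Rightarrow> (tree \<Rightarrow> 'a) set" where
  "lin_span G = {v. \<exists>S c. finite S \<and> S \<subseteq> G \<and> v = (\<lambda>t. \<Sum>g\<in>S. c g * g t)}"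

definition J4 :: "'a::field \<Rightarrow> 'a \<Rightarrow> 'a \<Rightarrow> 'a \<Rightarrow> 'a \<Rightarrow> 'a \<Rightarrow> (tree \<Rightarrow> 'a) set" where
  "J4 x1 x2 x3 x4 x5 x6 = lin_span (J4gens x1 x2 x3 x4 x5 x6)"

text \<open>S_4 acting on T(4) by permuting the arguments: sigma sends monomial t to relabel sigma t.\<close>
definition actT :: "(nat \<Rightarrow> nat) \<Rightarrow> (tree \<Rightarrow> 'a::field) \<Rightarrow> tree \<Rightarrow> 'a" where
  "actT \<sigma> v = (\<lambda>t. v (relabel (inv \<sigma>) t))"

text \<open>The group algebra F S_4 (regular representation): coefficient functions on permutations
  of {1..4}, sigma acting by left multiplication.\<close>
definition FS4 :: "((nat \<Rightarrow> nat) \<Rightarrow> 'a::field) set" where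
  "FS4 = {f. \<forall>\<tau>. f \<tau> \<noteq> 0 \<longrightarrow> \<tau> permutes {1..4}}"

definition actS :: "(nat \<Rightarrow> nat) \<Rightarrow> ((nat \<Rightarrow> nat) \<Rightarrow> 'a::field) \<Rightarrow> (nat \<Rightarrow> nat) \<Rightarrow> 'a" where
  "actS \<sigma> f = (\<lambda>\<tau>. f (inv \<sigma> \<circ> \<tau>))"

text \<open>O_x(4) = T(4)/J(4) is isomorphic to F S_4 as an S_4-module; by the first isomorphism
  theorem this means: there is an S_4-equivariant linear surjection T(4) -> F S_4 whose
  kernel is exactly J(4).\<close>
definition regular_arity4 :: "'a::field \<Rightarrow> 'a \<Rightarrow> 'a \<Rightarrow> 'a \<Rightarrow> 'a \<Rightarrow> 'a \<Rightarrow> bool" where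
  "regular_arity4 x1 x2 x3 x4 x5 x6 \<longleftrightarrow>
    (\<exists>\<phi> :: (tree \<Rightarrow> 'a) \<Rightarrow> ((nat \<Rightarrow> nat) \<Rightarrow> 'a).
       (\<forall>u\<in>T4. \<forall>v\<in>T4. \<phi> (\<lambda>t. u t + v t) = (\<lambda>\<tau>. \<phi> u \<tau> + \<phi> v \<tau>)) \<and>
       (\<forall>u\<in>T4. \<forall>c. \<phi> (\<lambda>t. c * u t) = (\<lambda>\<tau>. c * \<phi> u \<tau>)) \<and>
       \<phi> ` T4 = FS4 \<and>
       (\<forall>\<sigma>. \<sigma> permutes {1..4} \<longrightarrow> (\<forall>v\<in>T4. \<phi> (actT \<sigma> v) = actS \<sigma> (\<phi> v))) \<and>
       {v\<in>T4. \<phi> v = (\<lambda>_. 0)} = J4 x1 x2 x3 x4 x5 x6)"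

end

theory Submission
  imports Defs "HOL-Library.Function_Algebras" "HOL.Vector_Spaces"
begin

text \<open>T(4) has a basis of 120 monomials: five bracketings of four leaves, each with 24 labellings.
  When x has a single nonzero coordinate s, every spanning element of J(4) equates one monomial
  with s times another, so modulo J(4) monomials are proportional along chains of such moves.
  For x = (1,0,0,0,0,0), and for x = (0,0,0,0,s,0) with s^2 \<noteq> 1, every monomial is congruent to
  a multiple of a right comb a(b(cd)) (the balanced monomials (ab)(cd) vanish in the second case),
  and reading off the coefficients of the 24 combs is an S4-equivariant map onto F S4 with kernel
  J(4). In all other cases either a cycle of moves multiplies a monomial by a scalar other than 1,
  so that fewer than 24 monomials span T(4) modulo J(4), or, for s = \<plusminus>1 in the fifth or sixth
  coordinate, a 25th functional vanishing on J(4), supported on balanced monomials, shows that the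
  quotient is too large.\<close>

definition fscale :: "'a::field \<Rightarrow> ('b \<Rightarrow> 'a) \<Rightarrow> 'b \<Rightarrow> 'a" where
  "fscale c f = (\<lambda>x. c * f x)"

interpretation FV: vector_space "fscale :: 'a::field \<Rightarrow> ('b \<Rightarrow> 'a) \<Rightarrow> 'b \<Rightarrow> 'a"
  by unfold_locales (auto simp: fscale_def fun_eq_iff algebra_simps)

lemma fscale_apply [simp]: "fscale c f x = c * f x"
  by (simp add: fscale_def)

lemma sum_fun_apply: "finite A \<Longrightarrow> (\<Sum>i\<in>A. f i) x = (\<Sum>i\<in>A. f i x)"
  by (induction A rule: finite_induct) auto

lemma lin_span_eq_span: "lin_span G = FV.span G"
proof -
  have eq: "(\<lambda>t. \<Sum>g\<in>S. c g * g t) = (\<Sum>g\<in>S. fscale (c g) g)" if "finite S" for S and c :: "_ \<Rightarrow> 'a"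
    using that by (simp add: fun_eq_iff sum_fun_apply)
  show ?thesis
  proof
    show "lin_span G \<subseteq> FV.span G"
    proof
      fix v assume "v \<in> lin_span G"
      then obtain S c where S: "finite S" "S \<subseteq> G" and "v = (\<lambda>x. \<Sum>g\<in>S. c g * g x)"
        unfolding lin_span_def by blast
      then have "v = (\<Sum>g\<in>S. fscale (c g) g)" using eq[of S c] by simp
      then show "v \<in> FV.span G" unfolding FV.span_explicit using S by blast
    qed
    show "FV.span G \<subseteq> lin_span G"
    proof
      fix v assume "v \<in> FV.span G"
      then obtain S c where S: "finite S" "S \<subseteq> G" and "v = (\<Sum>g\<in>S. fscale (c g) g)"
        unfolding FV.span_explicit by blast
      then have "v = (\<lambda>x. \<Sum>g\<in>S. c g * g x)" using eq[of S c] by simp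
      then show "v \<in> lin_span G" unfolding lin_span_def using S by blast
    qed
  qed
qed

abbreviation "S1 a b c d \<equiv> Node (Node (Node (Leaf a) (Leaf b)) (Leaf c)) (Leaf d)"
abbreviation "S2 a b c d \<equiv> Node (Node (Leaf a) (Node (Leaf b) (Leaf c))) (Leaf d)"
abbreviation "S3 a b c d \<equiv> Node (Node (Leaf a) (Leaf b)) (Node (Leaf c) (Leaf d))"
abbreviation "S4 a b c d \<equiv> Node (Leaf a) (Node (Node (Leaf b) (Leaf c)) (Leaf d))"
abbreviation "S5 a b c d \<equiv> Node (Leaf a) (Node (Leaf b) (Node (Leaf c) (Leaf d)))"

definition labelling :: "nat \<Rightarrow> nat \<Rightarrow> nat \<Rightarrow> nat \<Rightarrow> bool" where
  "labelling a b c d \<longleftrightarrow> distinct [a,b,c,d] \<and> set [a,b,c,d] = {1..4}"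

lemma labelling_iff:
  "labelling a b c d \<longleftrightarrow> distinct [a,b,c,d] \<and> a \<in> {1..4} \<and> b \<in> {1..4} \<and> c \<in> {1..4} \<and> d \<in> {1..4}"
proof
  assume h: "distinct [a,b,c,d] \<and> a \<in> {1..4} \<and> b \<in> {1..4} \<and> c \<in> {1..4} \<and> d \<in> {1..4}"
  then have "card (set [a,b,c,d]) = card {1..4::nat}" using distinct_card[of "[a,b,c,d]"] by simp
  with h have "set [a,b,c,d] = {1..4}" by (intro card_subset_eq) auto
  then show "labelling a b c d" using h unfolding labelling_def by blast
qed (auto simp: labelling_def)

lemma labelling_distinct:
  "labelling a b c d \<Longrightarrow> a \<noteq> b \<and> a \<noteq> c \<and> a \<noteq> d \<and> b \<noteq> c \<and> b \<noteq> d \<and> c \<noteq> d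
    \<and> b \<noteq> a \<and> c \<noteq> a \<and> d \<noteq> a \<and> c \<noteq> b \<and> d \<noteq> b \<and> d \<noteq> c
    \<and> Suc 0 \<le> a \<and> a \<le> 4 \<and> Suc 0 \<le> b \<and> b \<le> 4 \<and> Suc 0 \<le> c \<and> c \<le> 4 \<and> Suc 0 \<le> d \<and> d \<le> 4"
  by (auto simp: labelling_iff)

lemma labelling_permute:
  "labelling a b c d \<Longrightarrow> labelling a b d c \<and> labelling a c b d \<and> labelling a c d b
    \<and> labelling a d b c \<and> labelling a d c b \<and> labelling b a c d \<and> labelling b a d c
    \<and> labelling b c a d \<and> labelling b c d a \<and> labelling b d a c \<and> labelling b d c a
    \<and> labelling c a b d \<and> labelling c a d b \<and> labelling c b a d \<and> labelling c b d a
    \<and> labelling c d a b \<and> labelling c d b a \<and> labelling d a b c \<and> labelling d a c b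
    \<and> labelling d b a c \<and> labelling d b c a \<and> labelling d c a b \<and> labelling d c b a"
  unfolding labelling_iff by auto

lemma leaves_ne_Nil: "leaves t \<noteq> []"
  by (induction t) auto

lemma length_leaves_pos: "length (leaves t) \<ge> 1"
  using leaves_ne_Nil[of t] by (cases "leaves t") auto

lemma length_leaves_1: "length (leaves t) = 1 \<Longrightarrow> \<exists>a. t = Leaf a"
proof (cases t)
  case (Node l r)
  assume "length (leaves t) = 1"
  then show ?thesis using Node length_leaves_pos[of l] length_leaves_pos[of r] by simp
qed auto

lemma length_leaves_2: "length (leaves t) = 2 \<Longrightarrow> \<exists>a b. t = Node (Leaf a) (Leaf b)"
proof (cases t)
  case (Node l r)
  assume "length (leaves t) = 2"
  then have "length (leaves l) = 1" "length (leaves r) = 1"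
    using Node length_leaves_pos[of l] length_leaves_pos[of r] by auto
  then show ?thesis using Node length_leaves_1 by blast
qed auto

lemma length_leaves_3:
  "length (leaves t) = 3 \<Longrightarrow>
    \<exists>a b c. t = Node (Node (Leaf a) (Leaf b)) (Leaf c) \<or> t = Node (Leaf a) (Node (Leaf b) (Leaf c))"
proof (cases t)
  case (Node l r)
  assume "length (leaves t) = 3"
  then consider "length (leaves l) = 1" "length (leaves r) = 2" | "length (leaves l) = 2" "length (leaves r) = 1"
    using Node length_leaves_pos[of l] length_leaves_pos[of r] by fastforce
  then show ?thesis
  proof cases
    case 1
    then obtain a b c where "l = Leaf a" "r = Node (Leaf b) (Leaf c)"
      using length_leaves_1 length_leaves_2 by metis
    then show ?thesis using Node by simp
  next
    case 2
    then obtain a b c where "l = Node (Leaf a) (Leaf b)" "r = Leaf c"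
      using length_leaves_1 length_leaves_2 by metis
    then show ?thesis using Node by simp
  qed
qed auto

lemma length_leaves_4:
  "length (leaves t) = 4 \<Longrightarrow>
    \<exists>a b c d. t = S1 a b c d \<or> t = S2 a b c d \<or> t = S3 a b c d \<or> t = S4 a b c d \<or> t = S5 a b c d"
proof (cases t)
  case (Node l r)
  assume "length (leaves t) = 4"
  then consider "length (leaves l) = 1" "length (leaves r) = 3" | "length (leaves l) = 2" "length (leaves r) = 2"
    | "length (leaves l) = 3" "length (leaves r) = 1"
    using Node length_leaves_pos[of l] length_leaves_pos[of r] by fastforce
  then show ?thesis
  proof cases
    case 1
    then obtain a b c d where "l = Leaf a"
      "r = Node (Node (Leaf b) (Leaf c)) (Leaf d) \<or> r = Node (Leaf b) (Node (Leaf c) (Leaf d))"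
      using length_leaves_1 length_leaves_3 by metis
    then show ?thesis using Node by auto
  next
    case 2
    then obtain a b c d where "l = Node (Leaf a) (Leaf b)" "r = Node (Leaf c) (Leaf d)"
      using length_leaves_2 by metis
    then show ?thesis using Node by auto
  next
    case 3
    then obtain a b c d where "r = Leaf d"
      "l = Node (Node (Leaf a) (Leaf b)) (Leaf c) \<or> l = Node (Leaf a) (Node (Leaf b) (Leaf c))"
      using length_leaves_1 length_leaves_3 by metis
    then show ?thesis using Node by auto
  qed
qed auto

lemma basis4_iff:
  "t \<in> basis4 \<longleftrightarrow> (\<exists>a b c d. labelling a b c d \<and>
     (t = S1 a b c d \<or> t = S2 a b c d \<or> t = S3 a b c d \<or> t = S4 a b c d \<or> t = S5 a b c d))"
proof
  assume h: "t \<in> basis4"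
  then have "length (leaves t) = 4"
    unfolding basis4_def using distinct_card[of "leaves t"] by auto
  then obtain a b c d where
    t: "t = S1 a b c d \<or> t = S2 a b c d \<or> t = S3 a b c d \<or> t = S4 a b c d \<or> t = S5 a b c d"
    using length_leaves_4 by blast
  then have "leaves t = [a,b,c,d]" by auto
  then have "labelling a b c d" using h unfolding basis4_def labelling_def by simp
  with t show "\<exists>a b c d. labelling a b c d \<and>
     (t = S1 a b c d \<or> t = S2 a b c d \<or> t = S3 a b c d \<or> t = S4 a b c d \<or> t = S5 a b c d)"
    by blast
next
  assume "\<exists>a b c d. labelling a b c d \<and>
     (t = S1 a b c d \<or> t = S2 a b c d \<or> t = S3 a b c d \<or> t = S4 a b c d \<or> t = S5 a b c d)"
  then obtain a b c d where l: "labelling a b c d"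
    and t: "t = S1 a b c d \<or> t = S2 a b c d \<or> t = S3 a b c d \<or> t = S4 a b c d \<or> t = S5 a b c d"
    by blast
  from t have "leaves t = [a,b,c,d]" by auto
  then show "t \<in> basis4" using l unfolding basis4_def labelling_def by simp
qed

lemma basis4_cases:
  assumes "t \<in> basis4"
  obtains a b c d where "labelling a b c d" "t = S1 a b c d"
    | a b c d where "labelling a b c d" "t = S2 a b c d"
    | a b c d where "labelling a b c d" "t = S3 a b c d"
    | a b c d where "labelling a b c d" "t = S4 a b c d"
    | a b c d where "labelling a b c d" "t = S5 a b c d"
  using assms unfolding basis4_iff by blast

lemma shapes_in_basis4 [simp]:
  "S1 a b c d \<in> basis4 \<longleftrightarrow> labelling a b c d" "S2 a b c d \<in> basis4 \<longleftrightarrow> labelling a b c d"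
  "S3 a b c d \<in> basis4 \<longleftrightarrow> labelling a b c d" "S4 a b c d \<in> basis4 \<longleftrightarrow> labelling a b c d"
  "S5 a b c d \<in> basis4 \<longleftrightarrow> labelling a b c d"
  by (simp_all add: basis4_def labelling_def)

lemma finite_basis4: "finite basis4"
proof -
  define F where "F = {1..4::nat} \<times> {1..4::nat} \<times> {1..4::nat} \<times> {1..4::nat}"
  define B where "B = (\<lambda>(a,b,c,d). {S1 a b c d, S2 a b c d, S3 a b c d, S4 a b c d, S5 a b c d})"
  have "basis4 \<subseteq> (\<Union>p\<in>F. B p)"
  proof
    fix t assume "t \<in> basis4"
    then obtain a b c d where l: "labelling a b c d"
      and t: "t = S1 a b c d \<or> t = S2 a b c d \<or> t = S3 a b c d \<or> t = S4 a b c d \<or> t = S5 a b c d"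
      unfolding basis4_iff by blast
    have "(a,b,c,d) \<in> F" using l unfolding labelling_iff F_def by simp
    moreover have "t \<in> B (a,b,c,d)" using t unfolding B_def by simp
    ultimately show "t \<in> (\<Union>p\<in>F. B p)" by blast
  qed
  moreover have "finite (\<Union>p\<in>F. B p)" unfolding F_def B_def by (intro finite_UN_I) auto
  ultimately show ?thesis by (rule finite_subset)
qed

lemma T4_subspace: "FV.subspace (T4 :: (tree \<Rightarrow> 'a::field) set)"
  unfolding FV.subspace_def T4_def by (auto, metis add.right_neutral)

lemma unitv_in_T4: "t \<in> basis4 \<Longrightarrow> unitv t \<in> T4"
  unfolding T4_def unitv_def by auto

lemma T4_eq_sum_unitv: assumes "v \<in> T4" shows "v = (\<Sum>t\<in>basis4. fscale (v t) (unitv t))"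
proof
  fix x
  have "(\<Sum>t\<in>basis4. fscale (v t) (unitv t)) x = (\<Sum>t\<in>basis4. v t * (if x = t then 1 else 0))"
    by (simp add: sum_fun_apply finite_basis4 unitv_def eq_commute)
  also have "\<dots> = v x" using assms by (simp add: if_distrib finite_basis4 T4_def cong: if_cong) blast
  finally show "v x = (\<Sum>t\<in>basis4. fscale (v t) (unitv t)) x" by simp
qed

lemma J4_eq_span: "J4 x1 x2 x3 x4 x5 x6 = FV.span (J4gens x1 x2 x3 x4 x5 x6)"
  by (simp add: J4_def lin_span_eq_span)

lemma J4_combine:
  "p \<in> J4 x1 x2 x3 x4 x5 x6 \<Longrightarrow> q \<in> J4 x1 x2 x3 x4 x5 x6 \<Longrightarrow> v = p + fscale c q \<Longrightarrow>
    v \<in> J4 x1 x2 x3 x4 x5 x6"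
  unfolding J4_eq_span using FV.span_add FV.span_scale by blast

lemma J4_scale: "p \<in> J4 x1 x2 x3 x4 x5 x6 \<Longrightarrow> v = fscale c p \<Longrightarrow> v \<in> J4 x1 x2 x3 x4 x5 x6"
  unfolding J4_eq_span using FV.span_scale by blast

lemma zero_in_J4: "0 \<in> J4 x1 x2 x3 x4 x5 x6"
  unfolding J4_eq_span using FV.span_zero by blast

lemma tmul_unitv: "tmul (unitv p) (unitv q) = (unitv (Node p q) :: tree \<Rightarrow> 'a::field)"
  by (auto simp: fun_eq_iff tmul_def unitv_def split: tree.split)

lemma tmul_diff_left: "tmul (f - g) h = tmul f h - tmul g h"
  and tmul_diff_right: "tmul h (f - g) = tmul h f - tmul h g"
  and tmul_fscale_left: "tmul (fscale c f) h = fscale c (tmul f h)"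
  and tmul_fscale_right: "tmul h (fscale c f) = fscale c (tmul h f)"
  by (auto simp: fun_eq_iff tmul_def algebra_simps split: tree.split)

lemma LR_eq:
  "LR x1 x2 x3 x4 x5 x6 p q s = tmul (tmul p q) s - fscale x1 (tmul p (tmul q s))
    - fscale x2 (tmul p (tmul s q)) - fscale x3 (tmul q (tmul p s)) - fscale x4 (tmul q (tmul s p))
    - fscale x5 (tmul s (tmul p q)) - fscale x6 (tmul s (tmul q p))"
  by (simp add: fun_eq_iff LR_def)

lemmas LR_expand = LR_eq gen_def tmul_unitv tmul_diff_left tmul_diff_right tmul_fscale_left
  tmul_fscale_right FV.scale_right_diff_distrib

text \<open>The five members of J4gens for the labels a, b, c, d, in the order of its definition,
  expanded in the monomial basis.\<close>

definition Jgen1 :: "'a::field \<Rightarrow> 'a \<Rightarrow> 'a \<Rightarrow> 'a \<Rightarrow> 'a \<Rightarrow> 'a \<Rightarrow> nat \<Rightarrow> nat \<Rightarrow> nat \<Rightarrow> nat \<Rightarrow> tree \<Rightarrow> 'a" where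
  "Jgen1 x1 x2 x3 x4 x5 x6 a b c d = unitv (S1 a b c d)
    - fscale x1 (unitv (S2 a b c d)) - fscale x2 (unitv (S2 a c b d)) - fscale x3 (unitv (S2 b a c d))
    - fscale x4 (unitv (S2 b c a d)) - fscale x5 (unitv (S2 c a b d)) - fscale x6 (unitv (S2 c b a d))"

definition Jgen2 :: "'a::field \<Rightarrow> 'a \<Rightarrow> 'a \<Rightarrow> 'a \<Rightarrow> 'a \<Rightarrow> 'a \<Rightarrow> nat \<Rightarrow> nat \<Rightarrow> nat \<Rightarrow> nat \<Rightarrow> tree \<Rightarrow> 'a" where
  "Jgen2 x1 x2 x3 x4 x5 x6 a b c d = unitv (S4 d a b c)
    - fscale x1 (unitv (S5 d a b c)) - fscale x2 (unitv (S5 d a c b)) - fscale x3 (unitv (S5 d b a c))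
    - fscale x4 (unitv (S5 d b c a)) - fscale x5 (unitv (S5 d c a b)) - fscale x6 (unitv (S5 d c b a))"

definition Jgen3 :: "'a::field \<Rightarrow> 'a \<Rightarrow> 'a \<Rightarrow> 'a \<Rightarrow> 'a \<Rightarrow> 'a \<Rightarrow> nat \<Rightarrow> nat \<Rightarrow> nat \<Rightarrow> nat \<Rightarrow> tree \<Rightarrow> 'a" where
  "Jgen3 x1 x2 x3 x4 x5 x6 a b c d = unitv (S1 a b c d)
    - fscale x1 (unitv (S3 a b c d)) - fscale x2 (unitv (S3 a b d c)) - fscale x3 (unitv (S4 c a b d))
    - fscale x4 (unitv (S5 c d a b)) - fscale x5 (unitv (S4 d a b c)) - fscale x6 (unitv (S5 d c a b))"

definition Jgen4 :: "'a::field \<Rightarrow> 'a \<Rightarrow> 'a \<Rightarrow> 'a \<Rightarrow> 'a \<Rightarrow> 'a \<Rightarrow> nat \<Rightarrow> nat \<Rightarrow> nat \<Rightarrow> nat \<Rightarrow> tree \<Rightarrow> 'a" where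
  "Jgen4 x1 x2 x3 x4 x5 x6 a b c d = unitv (S2 a b c d)
    - fscale x1 (unitv (S4 a b c d)) - fscale x2 (unitv (S5 a d b c)) - fscale x3 (unitv (S3 b c a d))
    - fscale x4 (unitv (S3 b c d a)) - fscale x5 (unitv (S5 d a b c)) - fscale x6 (unitv (S4 d b c a))"

definition Jgen5 :: "'a::field \<Rightarrow> 'a \<Rightarrow> 'a \<Rightarrow> 'a \<Rightarrow> 'a \<Rightarrow> 'a \<Rightarrow> nat \<Rightarrow> nat \<Rightarrow> nat \<Rightarrow> nat \<Rightarrow> tree \<Rightarrow> 'a" where
  "Jgen5 x1 x2 x3 x4 x5 x6 a b c d = unitv (S3 a b c d)
    - fscale x1 (unitv (S5 a b c d)) - fscale x2 (unitv (S4 a c d b)) - fscale x3 (unitv (S5 b a c d))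
    - fscale x4 (unitv (S4 b c d a)) - fscale x5 (unitv (S3 c d a b)) - fscale x6 (unitv (S3 c d b a))"

lemmas Jgen_defs = Jgen1_def Jgen2_def Jgen3_def Jgen4_def Jgen5_def

lemma J4gens_eq:
  "J4gens x1 x2 x3 x4 x5 x6 = (\<Union>(a,b,c,d) \<in> {(a,b,c,d). labelling a b c d}.
     {Jgen1 x1 x2 x3 x4 x5 x6 a b c d, Jgen2 x1 x2 x3 x4 x5 x6 a b c d, Jgen3 x1 x2 x3 x4 x5 x6 a b c d,
      Jgen4 x1 x2 x3 x4 x5 x6 a b c d, Jgen5 x1 x2 x3 x4 x5 x6 a b c d})"
  unfolding J4gens_def labelling_def by (simp add: LR_expand Jgen_defs)

lemma J4gens_cases:
  assumes "g \<in> J4gens x1 x2 x3 x4 x5 x6"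
  obtains a b c d where "labelling a b c d"
    "g = Jgen1 x1 x2 x3 x4 x5 x6 a b c d \<or> g = Jgen2 x1 x2 x3 x4 x5 x6 a b c d
      \<or> g = Jgen3 x1 x2 x3 x4 x5 x6 a b c d \<or> g = Jgen4 x1 x2 x3 x4 x5 x6 a b c d
      \<or> g = Jgen5 x1 x2 x3 x4 x5 x6 a b c d"
  using assms unfolding J4gens_eq by blast

lemma Jgen_in_J4:
  assumes "labelling a b c d"
  shows "Jgen1 x1 x2 x3 x4 x5 x6 a b c d \<in> J4 x1 x2 x3 x4 x5 x6"
    and "Jgen2 x1 x2 x3 x4 x5 x6 a b c d \<in> J4 x1 x2 x3 x4 x5 x6"
    and "Jgen3 x1 x2 x3 x4 x5 x6 a b c d \<in> J4 x1 x2 x3 x4 x5 x6"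
    and "Jgen4 x1 x2 x3 x4 x5 x6 a b c d \<in> J4 x1 x2 x3 x4 x5 x6"
    and "Jgen5 x1 x2 x3 x4 x5 x6 a b c d \<in> J4 x1 x2 x3 x4 x5 x6"
  using assms unfolding J4_eq_span J4gens_eq by (blast intro: FV.span_base)+

lemma J4gens_subset_T4: "J4gens x1 x2 x3 x4 x5 x6 \<subseteq> T4"
proof
  fix g assume "g \<in> J4gens x1 x2 x3 x4 x5 x6"
  then obtain a b c d where l: "labelling a b c d" and g: "g = Jgen1 x1 x2 x3 x4 x5 x6 a b c d
      \<or> g = Jgen2 x1 x2 x3 x4 x5 x6 a b c d \<or> g = Jgen3 x1 x2 x3 x4 x5 x6 a b c d
      \<or> g = Jgen4 x1 x2 x3 x4 x5 x6 a b c d \<or> g = Jgen5 x1 x2 x3 x4 x5 x6 a b c d"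
    by (rule J4gens_cases)
  note closed = FV.subspace_diff[OF T4_subspace] FV.subspace_scale[OF T4_subspace]
  from g show "g \<in> T4"
    using labelling_permute[OF l] l
    by (elim disjE) (simp_all add: Jgen_defs closed unitv_in_T4)
qed

lemma J4_subset_T4: "J4 x1 x2 x3 x4 x5 x6 \<subseteq> T4"
  unfolding J4_eq_span by (rule FV.span_minimal[OF J4gens_subset_T4 T4_subspace])

definition pairing :: "(tree \<Rightarrow> 'a::field) \<Rightarrow> (tree \<Rightarrow> 'a) \<Rightarrow> 'a" where
  "pairing k v = (\<Sum>t\<in>basis4. v t * k t)"

lemma pairing_add [simp]: "pairing k (f + g) = pairing k f + pairing k g"
  and pairing_diff [simp]: "pairing k (f - g) = pairing k f - pairing k g"
  and pairing_fscale [simp]: "pairing k (fscale c f) = c * pairing k f"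
  and pairing_zero [simp]: "pairing k 0 = 0"
  by (simp_all add: pairing_def algebra_simps sum.distrib sum_subtractf sum_distrib_left)

lemma pairing_unitv [simp]: "t \<in> basis4 \<Longrightarrow> pairing k (unitv t) = k t"
proof -
  assume "t \<in> basis4"
  have "(\<lambda>t'. unitv t t' * k t') = (\<lambda>t'. if t = t' then k t else 0)"
    by (auto simp: unitv_def fun_eq_iff)
  then have "pairing k (unitv t) = (\<Sum>t'\<in>basis4. if t = t' then k t else 0)"
    unfolding pairing_def by metis
  then show ?thesis using \<open>t \<in> basis4\<close> by (simp add: finite_basis4)
qed

lemma pairing_sum: "finite A \<Longrightarrow> pairing k (\<Sum>i\<in>A. f i) = (\<Sum>i\<in>A. pairing k (f i))"
proof (induction A rule: finite_induct)
  case empty then show ?case by (simp only: sum.empty pairing_zero)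
next
  case (insert x F)
  show ?case unfolding sum.insert[OF insert(1,2)] pairing_add insert(3) ..
qed

lemma pairing_vanishes_on_span:
  assumes "\<And>g. g \<in> G \<Longrightarrow> pairing k g = 0" and "v \<in> FV.span G"
  shows "pairing k v = 0"
proof -
  have "FV.subspace {v. pairing k v = 0}" unfolding FV.subspace_def by simp
  then show ?thesis using FV.span_induct[OF assms(2), of "\<lambda>v. pairing k v = 0"] assms(1) by blast
qed

lemma pairing_vanishes_on_J4:
  "(\<And>g. g \<in> J4gens x1 x2 x3 x4 x5 x6 \<Longrightarrow> pairing k g = 0) \<Longrightarrow> v \<in> J4 x1 x2 x3 x4 x5 x6 \<Longrightarrow> pairing k v = 0"
  unfolding J4_eq_span by (rule pairing_vanishes_on_span)

definition perms4 :: "(nat \<Rightarrow> nat) set" where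
  "perms4 = {\<tau>. \<tau> permutes {1..4}}"

definition word4 :: "(nat \<Rightarrow> nat) \<Rightarrow> nat list" where
  "word4 \<tau> = [\<tau> 1, \<tau> 2, \<tau> 3, \<tau> 4]"

definition perm_of_word :: "nat list \<Rightarrow> nat \<Rightarrow> nat" where
  "perm_of_word w = (\<lambda>i. if i \<in> {1..4} then w ! (i - 1) else i)"

lemma finite_perms4: "finite perms4"
  unfolding perms4_def by (rule finite_permutations) simp

lemma card_perms4: "card perms4 = 24"
proof -
  have "card perms4 = fact 4" unfolding perms4_def by (rule card_permutations) auto
  then show ?thesis by (simp add: fact_numeral)
qed

lemma length_4_cases: "length w = 4 \<Longrightarrow> \<exists>a b c d. w = [a,b,c,d]"
  by (cases w; cases "tl w"; cases "tl (tl w)"; cases "tl (tl (tl w))"; auto)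

lemma length_labelling_word: "distinct (w::nat list) \<Longrightarrow> set w = {1..4} \<Longrightarrow> length w = 4"
  using distinct_card[of w] by simp

lemma word4_eq_map: "word4 \<tau> = map \<tau> [1,2,3,4]"
  by (simp add: word4_def)

lemma word4_labelling: "\<tau> \<in> perms4 \<Longrightarrow> distinct (word4 \<tau>) \<and> set (word4 \<tau>) = {1..4}"
proof -
  assume "\<tau> \<in> perms4"
  then have p: "\<tau> permutes {1..4}" by (simp add: perms4_def)
  have "inj_on \<tau> (set [1,2,3,4::nat])" using permutes_inj[OF p] by (rule inj_on_subset) simp
  then have "distinct (word4 \<tau>)" unfolding word4_eq_map by (simp only: distinct_map) simp
  moreover have "set [1,2,3,4::nat] = {1..4}" by auto
  then have "set (word4 \<tau>) = \<tau> ` {1..4}" unfolding word4_eq_map set_map by simp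
  ultimately show ?thesis using permutes_image[OF p] by simp
qed

lemma perm_of_word_in_perms4:
  assumes "distinct w" "set w = {1..4}"
  shows "perm_of_word w \<in> perms4"
proof -
  obtain a b c d where w: "w = [a,b,c,d]" using length_4_cases length_labelling_word[OF assms] by blast
  have e: "perm_of_word w 1 = a" "perm_of_word w 2 = b" "perm_of_word w 3 = c" "perm_of_word w 4 = d"
    unfolding perm_of_word_def w by simp_all
  have s: "{1..4::nat} = {1,2,3,4}" by auto
  have "inj_on (perm_of_word w) {1..4}" unfolding s using e assms(1) w by simp
  moreover have "perm_of_word w ` {1..4} = {1..4}" using e assms(2) w unfolding s by simp
  ultimately have "bij_betw (perm_of_word w) {1..4} {1..4}" unfolding bij_betw_def by blast
  then have "perm_of_word w permutes {1..4}"
    by (rule bij_imp_permutes) (simp add: perm_of_word_def del: atLeastAtMost_iff)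
  then show ?thesis by (simp add: perms4_def)
qed

lemma word4_perm_of_word: "length w = 4 \<Longrightarrow> word4 (perm_of_word w) = w"
  using length_4_cases[of w] by (auto simp: word4_def perm_of_word_def)

lemma perm_of_word4: assumes "\<tau> \<in> perms4" shows "perm_of_word (word4 \<tau>) = \<tau>"
proof
  fix i show "perm_of_word (word4 \<tau>) i = \<tau> i"
  proof (cases "i \<in> {1..4}")
    case True
    then have "i = 1 \<or> i = 2 \<or> i = 3 \<or> i = 4" by auto
    then show ?thesis by (auto simp: perm_of_word_def word4_def)
  next
    case False
    then show ?thesis using assms permutes_not_in[of \<tau> "{1..4}" i]
      by (simp add: perm_of_word_def perms4_def del: atLeastAtMost_iff)
  qed
qed

lemma word4_inj: "\<tau> \<in> perms4 \<Longrightarrow> \<tau>' \<in> perms4 \<Longrightarrow> word4 \<tau> = word4 \<tau>' \<Longrightarrow> \<tau> = \<tau>'"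
  by (metis perm_of_word4)

lemma labelling_word4:
  assumes "labelling a b c d"
  obtains \<tau> where "\<tau> \<in> perms4" "word4 \<tau> = [a,b,c,d]"
  using assms perm_of_word_in_perms4[of "[a,b,c,d]"] word4_perm_of_word[of "[a,b,c,d]"]
  unfolding labelling_def by auto

lemma card_labelled_le:
  fixes f :: "nat \<Rightarrow> nat \<Rightarrow> nat \<Rightarrow> nat \<Rightarrow> 'b"
  defines "L \<equiv> {f a b c d |a b c d. labelling a b c d}"
  shows "finite L" and "card L \<le> 24"
proof -
  let ?g = "\<lambda>\<tau>. f (\<tau> 1) (\<tau> 2) (\<tau> 3) (\<tau> 4)"
  have sub: "L \<subseteq> ?g ` perms4"
  proof
    fix t assume "t \<in> L"
    then obtain a b c d where l: "labelling a b c d" and t: "t = f a b c d"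
      unfolding L_def by blast
    obtain \<tau> where "\<tau> \<in> perms4" "word4 \<tau> = [a,b,c,d]" using labelling_word4[OF l] .
    then show "t \<in> ?g ` perms4" using t by (force simp: word4_def)
  qed
  show "finite L" using finite_subset[OF sub] finite_perms4 by blast
  have "card L \<le> card (?g ` perms4)" using card_mono[OF _ sub] finite_perms4 by blast
  also have "\<dots> \<le> 24" using card_image_le[OF finite_perms4, of ?g] card_perms4 by simp
  finally show "card L \<le> 24" .
qed

lemma relabel_comp: "relabel f (relabel g t) = relabel (f \<circ> g) t"
  by (induction t) auto

lemma relabel_id: "relabel id t = t"
  by (induction t) auto

lemma leaves_relabel: "leaves (relabel f t) = map f (leaves t)"
  by (induction t) auto

lemma relabel_in_basis4:
  assumes p: "\<sigma> permutes {1..4}" and t: "t \<in> basis4"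
  shows "relabel \<sigma> t \<in> basis4"
  using t permutes_image[OF p] inj_on_subset[OF permutes_inj[OF p]]
  unfolding basis4_def by (simp add: leaves_relabel distinct_map)

lemma bij_betw_relabel: assumes p: "\<sigma> permutes {1..4}" shows "bij_betw (relabel \<sigma>) basis4 basis4"
proof (rule bij_betw_byWitness[where f'="relabel (inv \<sigma>)"])
  show "\<forall>a\<in>basis4. relabel (inv \<sigma>) (relabel \<sigma> a) = a"
    and "\<forall>a\<in>basis4. relabel \<sigma> (relabel (inv \<sigma>) a) = a"
    by (simp_all add: relabel_comp permutes_inv_o[OF p] relabel_id)
  show "relabel \<sigma> ` basis4 \<subseteq> basis4" using relabel_in_basis4[OF p] by blast
  show "relabel (inv \<sigma>) ` basis4 \<subseteq> basis4" using relabel_in_basis4[OF permutes_inv[OF p]] by blast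
qed

definition perm_indicator :: "(nat \<Rightarrow> nat) \<Rightarrow> (nat \<Rightarrow> nat) \<Rightarrow> 'a::field" where
  "perm_indicator \<tau> = (\<lambda>\<rho>. if \<rho> = \<tau> then 1 else 0)"

lemma inj_perm_indicator: "inj (perm_indicator :: _ \<Rightarrow> _ \<Rightarrow> 'a::field)"
  by (rule injI) (metis perm_indicator_def one_neq_zero)

lemma card_perm_indicators: "card ((perm_indicator :: _ \<Rightarrow> _ \<Rightarrow> 'a::field) ` perms4) = 24"
  using card_image[OF inj_on_subset[OF inj_perm_indicator]] card_perms4 by (metis subset_UNIV)

lemma FS4_subset_span_perm_indicators: "FS4 \<subseteq> FV.span ((perm_indicator :: _ \<Rightarrow> _ \<Rightarrow> 'a::field) ` perms4)"
proof
  fix f :: "(nat \<Rightarrow> nat) \<Rightarrow> 'a" assume f: "f \<in> FS4"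
  have "f = (\<Sum>\<tau>\<in>perms4. fscale (f \<tau>) (perm_indicator \<tau>))"
  proof
    fix \<rho>
    have "(\<Sum>\<tau>\<in>perms4. fscale (f \<tau>) (perm_indicator \<tau>)) \<rho> = (\<Sum>\<tau>\<in>perms4. if \<rho> = \<tau> then f \<rho> else 0)"
      by (simp add: sum_fun_apply finite_perms4 perm_indicator_def if_distrib cong: if_cong)
    also have "\<dots> = f \<rho>"
      using f finite_perms4 unfolding FS4_def perms4_def by (cases "\<rho> permutes {1..4}") auto
    finally show "f \<rho> = (\<Sum>\<tau>\<in>perms4. fscale (f \<tau>) (perm_indicator \<tau>)) \<rho>" by simp
  qed
  also have "\<dots> \<in> FV.span (perm_indicator ` perms4)"
    by (intro FV.span_sum FV.span_scale FV.span_base) auto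
  finally show "f \<in> FV.span (perm_indicator ` perms4)" .
qed

lemma independent_perm_indicators: "FV.independent ((perm_indicator :: _ \<Rightarrow> _ \<Rightarrow> 'a::field) ` perms4)"
proof -
  have fin: "finite ((perm_indicator :: _ \<Rightarrow> _ \<Rightarrow> 'a) ` perms4)" using finite_perms4 by simp
  show ?thesis unfolding FV.dependent_finite[OF fin]
  proof
    assume "\<exists>c. (\<exists>v\<in>(perm_indicator :: _ \<Rightarrow> _ \<Rightarrow> 'a) ` perms4. c v \<noteq> 0)
      \<and> (\<Sum>v\<in>perm_indicator ` perms4. fscale (c v) v) = 0"
    then obtain c \<tau> where \<tau>: "\<tau> \<in> perms4" and c: "c (perm_indicator \<tau> :: _ \<Rightarrow> 'a) \<noteq> 0"
      and s: "(\<Sum>v\<in>perm_indicator ` perms4. fscale (c v) v) = (0 :: _ \<Rightarrow> 'a)" by blast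
    have "0 = (\<Sum>v\<in>perm_indicator ` perms4. fscale (c v) v) \<tau>" using s by simp
    also have "\<dots> = (\<Sum>\<rho>\<in>perms4. c (perm_indicator \<rho>) * perm_indicator \<rho> \<tau>)"
      by (simp add: sum_fun_apply finite_perms4 sum.reindex inj_on_subset[OF inj_perm_indicator])
    also have "\<dots> = (\<Sum>\<rho>\<in>perms4. if \<rho> = \<tau> then c (perm_indicator \<tau>) else 0)"
      by (intro sum.cong) (auto simp: perm_indicator_def)
    also have "\<dots> = c (perm_indicator \<tau>)" using \<tau> finite_perms4 by simp
    finally show False using c by simp
  qed
qed

section \<open>Dimension obstructions to regularity\<close>

lemma perm_indicators_subset_FS4: "(perm_indicator :: _ \<Rightarrow> _ \<Rightarrow> 'a::field) ` perms4 \<subseteq> FS4"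
  unfolding FS4_def perms4_def perm_indicator_def by (auto split: if_splits)

lemma card_ge_24_if_spans_FS4:
  fixes W :: "((nat \<Rightarrow> nat) \<Rightarrow> 'a::field) set"
  assumes "finite W" "FS4 \<subseteq> FV.span W"
  shows "24 \<le> card W"
  using FV.independent_span_bound[OF assms(1) independent_perm_indicators]
    perm_indicators_subset_FS4 assms(2) card_perm_indicators[where 'a='a] by fastforce

lemma card_le_24_if_independent_in_FS4:
  fixes B :: "((nat \<Rightarrow> nat) \<Rightarrow> 'a::field) set"
  assumes "FV.independent B" "B \<subseteq> FS4"
  shows "card B \<le> 24"
  using FV.independent_span_bound[OF finite_imageI[OF finite_perms4] assms(1)]
    FS4_subset_span_perm_indicators assms(2) card_perm_indicators[where 'a='a] by fastforce

locale regular_map =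
  fixes \<phi> :: "(tree \<Rightarrow> 'a::field) \<Rightarrow> (nat \<Rightarrow> nat) \<Rightarrow> 'a" and J :: "(tree \<Rightarrow> 'a) set"
  assumes add: "\<And>u v. u \<in> T4 \<Longrightarrow> v \<in> T4 \<Longrightarrow> \<phi> (u + v) = \<phi> u + \<phi> v"
    and scale: "\<And>u c. u \<in> T4 \<Longrightarrow> \<phi> (fscale c u) = fscale c (\<phi> u)"
    and image: "\<phi> ` T4 = FS4"
    and kernel: "{v\<in>T4. \<phi> v = 0} = J"
begin

lemma map_zero: "\<phi> 0 = 0"
  using scale[of 0 0] FV.subspace_0[OF T4_subspace] by (simp add: fscale_def zero_fun_def)

lemma map_diff: assumes "u \<in> T4" "v \<in> T4" shows "\<phi> (u - v) = \<phi> u - \<phi> v"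
proof -
  have e: "u - v = u + fscale (-1) v" by (simp add: fun_eq_iff)
  have "\<phi> (u - v) = \<phi> u + \<phi> (fscale (-1) v)"
    unfolding e by (rule add[OF assms(1) FV.subspace_scale[OF T4_subspace assms(2)]])
  also have "\<dots> = \<phi> u + fscale (-1) (\<phi> v)" by (simp only: scale[OF assms(2)])
  also have "\<dots> = \<phi> u - \<phi> v" by (simp add: fun_eq_iff)
  finally show ?thesis .
qed

lemma map_sum: "finite A \<Longrightarrow> (\<And>i. i \<in> A \<Longrightarrow> f i \<in> T4) \<Longrightarrow> \<phi> (\<Sum>i\<in>A. f i) = (\<Sum>i\<in>A. \<phi> (f i))"
proof (induction A rule: finite_induct)
  case empty then show ?case by (simp only: sum.empty map_zero)
next
  case (insert x F)
  have "sum f F \<in> T4" using insert(4) by (intro FV.subspace_sum[OF T4_subspace]) auto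
  then show ?case unfolding sum.insert[OF insert(1,2)]
    by (simp only: add[OF insert(4)[OF insertI1] \<open>sum f F \<in> T4\<close>] insert.IH[OF insert(4)[OF insertI2]])
qed

lemma linear_combination:
  assumes "finite A" "\<And>i. i \<in> A \<Longrightarrow> f i \<in> T4"
  shows "\<phi> (\<Sum>i\<in>A. fscale (c i) (f i)) = (\<Sum>i\<in>A. fscale (c i) (\<phi> (f i)))"
proof -
  have "\<phi> (\<Sum>i\<in>A. fscale (c i) (f i)) = (\<Sum>i\<in>A. \<phi> (fscale (c i) (f i)))"
    using assms by (intro map_sum) (auto intro: FV.subspace_scale[OF T4_subspace])
  also have "\<dots> = (\<Sum>i\<in>A. fscale (c i) (\<phi> (f i)))" using assms scale by simp
  finally show ?thesis .
qed

lemma FS4_subset_span_image: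
  assumes W: "W \<subseteq> T4" and spanning: "\<And>t. t \<in> basis4 \<Longrightarrow> \<exists>w\<in>FV.span W. unitv t - w \<in> J"
  shows "FS4 \<subseteq> FV.span (\<phi> ` W)"
proof
  let ?S = "FV.span (\<phi> ` W)"
  have "FV.subspace {w. w \<in> T4 \<and> \<phi> w \<in> ?S}"
    unfolding FV.subspace_def
    using map_zero add scale FV.span_zero FV.span_add FV.span_scale FV.subspace_0[OF T4_subspace]
      FV.subspace_add[OF T4_subspace] FV.subspace_scale[OF T4_subspace] by auto
  then have span_W: "w \<in> T4 \<and> \<phi> w \<in> ?S" if "w \<in> FV.span W" for w
    using FV.span_induct[OF that] W by (auto intro: FV.span_base)
  have unitv_S: "\<phi> (unitv t) \<in> ?S" if t: "t \<in> basis4" for t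
  proof -
    obtain w where w: "w \<in> FV.span W" "unitv t - w \<in> J" using spanning[OF t] by blast
    then have "\<phi> (unitv t - w) = 0" using kernel by blast
    then show ?thesis using map_diff[OF unitv_in_T4[OF t]] span_W[OF w(1)] by simp
  qed
  fix f :: "(nat \<Rightarrow> nat) \<Rightarrow> 'a" assume "f \<in> FS4"
  then obtain v where v: "v \<in> T4" "f = \<phi> v" using image by blast
  have "\<phi> v = (\<Sum>t\<in>basis4. fscale (v t) (\<phi> (unitv t)))"
    by (subst T4_eq_sum_unitv[OF v(1)]) (rule linear_combination[OF finite_basis4 unitv_in_T4])
  also have "\<dots> \<in> ?S" using unitv_S by (intro FV.span_sum FV.span_scale) auto
  finally show "f \<in> ?S" using v by simp
qed

lemma card_ge_24_if_spanning:
  assumes "finite W" "W \<subseteq> T4" "\<And>t. t \<in> basis4 \<Longrightarrow> \<exists>w\<in>FV.span W. unitv t - w \<in> J"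
  shows "24 \<le> card W"
  using card_ge_24_if_spans_FS4[OF finite_imageI FS4_subset_span_image] card_image_le assms
  by (meson le_trans)

context
  fixes I :: "'i set" and w :: "'i \<Rightarrow> tree \<Rightarrow> 'a" and k :: "'i \<Rightarrow> tree \<Rightarrow> 'a"
  assumes fin: "finite I" and w: "\<And>i. i \<in> I \<Longrightarrow> w i \<in> T4"
    and k_J: "\<And>i v. i \<in> I \<Longrightarrow> v \<in> J \<Longrightarrow> pairing (k i) v = 0"
    and k_w: "\<And>i j. i \<in> I \<Longrightarrow> j \<in> I \<Longrightarrow> pairing (k i) (w j) = (if i = j then 1 else 0)"
begin

lemma inj_on_separated: "inj_on (\<lambda>i. \<phi> (w i)) I"
proof (rule inj_onI)
  fix i j assume ij: "i \<in> I" "j \<in> I" "\<phi> (w i) = \<phi> (w j)"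
  have "w i - w j \<in> J"
    using kernel FV.subspace_diff[OF T4_subspace w w] map_diff[OF w w] ij by fastforce
  then have "pairing (k i) (w i - w j) = 0" using k_J ij by blast
  then show "i = j" using k_w[OF ij(1) ij(1)] k_w[OF ij(1) ij(2)] by (auto split: if_splits)
qed

lemma independent_separated: "FV.independent ((\<lambda>i. \<phi> (w i)) ` I)"
  unfolding FV.dependent_finite[OF finite_imageI[OF fin]]
proof
  assume "\<exists>c. (\<exists>v\<in>(\<lambda>i. \<phi> (w i)) ` I. c v \<noteq> 0) \<and> (\<Sum>v\<in>(\<lambda>i. \<phi> (w i)) ` I. fscale (c v) v) = 0"
  then obtain c j where j: "j \<in> I" "c (\<phi> (w j)) \<noteq> 0"
    and s: "(\<Sum>v\<in>(\<lambda>i. \<phi> (w i)) ` I. fscale (c v) v) = 0" by blast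
  define v where "v = (\<Sum>i\<in>I. fscale (c (\<phi> (w i))) (w i))"
  have "v \<in> T4" unfolding v_def using w
    by (intro FV.subspace_sum[OF T4_subspace] FV.subspace_scale[OF T4_subspace]) auto
  moreover have "\<phi> v = 0" using s unfolding v_def
    by (simp add: linear_combination[OF fin w] sum.reindex[OF inj_on_separated] o_def)
  ultimately have "pairing (k j) v = 0" using kernel k_J j by blast
  moreover have "pairing (k j) v = (\<Sum>i\<in>I. c (\<phi> (w i)) * (if j = i then 1 else 0))"
    unfolding v_def pairing_sum[OF fin] pairing_fscale using k_w[OF j(1)] by (intro sum.cong) auto
  moreover have "\<dots> = c (\<phi> (w j))" using j fin by (simp add: if_distrib cong: if_cong)
  ultimately show False using j by simp
qed

lemma card_le_24_if_separated: "card I \<le> 24"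
  using card_le_24_if_independent_in_FS4[OF independent_separated] image w
    card_image[OF inj_on_separated] by fastforce

end

end

lemma regular_arity4_imp_regular_map:
  assumes "regular_arity4 x1 x2 x3 x4 x5 x6"
  obtains \<phi> :: "(tree \<Rightarrow> 'a::field) \<Rightarrow> (nat \<Rightarrow> nat) \<Rightarrow> 'a" where "regular_map \<phi> (J4 x1 x2 x3 x4 x5 x6)"
proof -
  from assms obtain \<phi> :: "(tree \<Rightarrow> 'a) \<Rightarrow> (nat \<Rightarrow> nat) \<Rightarrow> 'a" where
    "\<forall>u\<in>T4. \<forall>v\<in>T4. \<phi> (\<lambda>t. u t + v t) = (\<lambda>\<tau>. \<phi> u \<tau> + \<phi> v \<tau>)"
    "\<forall>u\<in>T4. \<forall>c. \<phi> (\<lambda>t. c * u t) = (\<lambda>\<tau>. c * \<phi> u \<tau>)"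
    "\<phi> ` T4 = FS4" "{v\<in>T4. \<phi> v = (\<lambda>_. 0)} = J4 x1 x2 x3 x4 x5 x6"
    unfolding regular_arity4_def by blast
  then have "regular_map \<phi> (J4 x1 x2 x3 x4 x5 x6)"
    by unfold_locales (simp_all add: plus_fun_def fscale_def zero_fun_def)
  then show ?thesis using that by blast
qed

lemma not_regular_if_small_spanning_set:
  fixes W :: "(tree \<Rightarrow> 'a::field) set"
  assumes "finite W" "W \<subseteq> T4" "card W < 24"
    and "\<And>t. t \<in> basis4 \<Longrightarrow> \<exists>w\<in>FV.span W. unitv t - w \<in> J4 x1 x2 x3 x4 x5 x6"
  shows "\<not> regular_arity4 x1 x2 x3 x4 x5 x6"
  using assms regular_map.card_ge_24_if_spanning
  by (metis regular_arity4_imp_regular_map not_le)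

lemma not_regular_if_separating_functionals:
  fixes w :: "'i \<Rightarrow> tree \<Rightarrow> 'a::field" and k :: "'i \<Rightarrow> tree \<Rightarrow> 'a"
  assumes "finite I" "card I > 24" "\<And>i. i \<in> I \<Longrightarrow> w i \<in> T4"
    and k_J: "\<And>i g. i \<in> I \<Longrightarrow> g \<in> J4gens x1 x2 x3 x4 x5 x6 \<Longrightarrow> pairing (k i) g = 0"
    and "\<And>i j. i \<in> I \<Longrightarrow> j \<in> I \<Longrightarrow> pairing (k i) (w j) = (if i = j then 1 else 0)"
  shows "\<not> regular_arity4 x1 x2 x3 x4 x5 x6"
proof
  assume "regular_arity4 x1 x2 x3 x4 x5 x6"
  then obtain \<phi> :: "(tree \<Rightarrow> 'a) \<Rightarrow> (nat \<Rightarrow> nat) \<Rightarrow> 'a" where "regular_map \<phi> (J4 x1 x2 x3 x4 x5 x6)"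
    by (rule regular_arity4_imp_regular_map)
  moreover have "pairing (k i) v = 0" if "i \<in> I" "v \<in> J4 x1 x2 x3 x4 x5 x6" for i v
    using pairing_vanishes_on_J4[of x1 x2 x3 x4 x5 x6 "k i" v] k_J that by blast
  ultimately have "card I \<le> 24"
    using regular_map.card_le_24_if_separated[of _ _ I w k] assms(1,3,5) by blast
  then show False using assms(2) by simp
qed

section \<open>Reduction of monomials modulo J(4)\<close>

text \<open>The scalar may be 0, so a monomial lying in J reduces to every nonempty M.\<close>

definition reduces_to :: "(tree \<Rightarrow> 'a::field) set \<Rightarrow> tree set \<Rightarrow> tree \<Rightarrow> bool" where
  "reduces_to J M t \<longleftrightarrow> (\<exists>m\<in>M. \<exists>c. unitv t - fscale c (unitv m) \<in> J)"

lemma reduces_to_self: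
  assumes "t \<in> M" shows "reduces_to (J4 x1 x2 x3 x4 x5 x6) M t"
proof -
  have "unitv t - fscale 1 (unitv t) = (0 :: tree \<Rightarrow> 'a)" by (simp add: fun_eq_iff)
  then show ?thesis using assms zero_in_J4 unfolding reduces_to_def by metis
qed

lemma reduces_to_if_in_J4:
  assumes "unitv t \<in> J4 x1 x2 x3 x4 x5 x6" "m \<in> M" shows "reduces_to (J4 x1 x2 x3 x4 x5 x6) M t"
proof -
  have "unitv t - fscale 0 (unitv m) = unitv t" by (simp add: fun_eq_iff)
  then show ?thesis using assms unfolding reduces_to_def by metis
qed

lemma reduces_to_step:
  assumes "unitv t - fscale c (unitv t') \<in> J4 x1 x2 x3 x4 x5 x6"
    and "reduces_to (J4 x1 x2 x3 x4 x5 x6) M t'"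
  shows "reduces_to (J4 x1 x2 x3 x4 x5 x6) M t"
proof -
  obtain m c' where m: "m \<in> M" and t': "unitv t' - fscale c' (unitv m) \<in> J4 x1 x2 x3 x4 x5 x6"
    using assms(2) unfolding reduces_to_def by blast
  have "unitv t - fscale (c * c') (unitv m) \<in> J4 x1 x2 x3 x4 x5 x6"
    by (rule J4_combine[OF assms(1) t', where c=c]) (simp add: fun_eq_iff algebra_simps)
  then show ?thesis using m unfolding reduces_to_def by blast
qed

lemma not_regular_if_few_monomials_suffice:
  assumes fin: "finite M" and M: "M \<subseteq> basis4" and card: "card M < 24"
    and red: "\<And>t. t \<in> basis4 \<Longrightarrow> reduces_to (J4 x1 x2 x3 x4 x5 x6) M t"
  shows "\<not> regular_arity4 x1 x2 x3 x4 x5 (x6 :: 'a::field)"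
proof (rule not_regular_if_small_spanning_set)
  show "finite (unitv ` M :: (tree \<Rightarrow> 'a) set)" using fin by simp
  show "unitv ` M \<subseteq> (T4 :: (tree \<Rightarrow> 'a) set)" using M unitv_in_T4 by blast
  show "card (unitv ` M :: (tree \<Rightarrow> 'a) set) < 24" using card_image_le[OF fin] card by (rule le_less_trans)
  fix t assume "t \<in> basis4"
  then obtain m c where "m \<in> M" "unitv t - fscale c (unitv m) \<in> J4 x1 x2 x3 x4 x5 x6"
    using red unfolding reduces_to_def by blast
  then show "\<exists>w\<in>FV.span (unitv ` M). unitv t - w \<in> J4 x1 x2 x3 x4 x5 x6"
    by (blast intro: FV.span_scale FV.span_base)
qed

definition combs4 :: "tree set" where
  "combs4 = {S5 a b c d |a b c d. labelling a b c d}"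

text \<open>If all monomials reduce to right combs, one proportionality between two distinct combs
  already leaves only 23 of them to span the quotient.\<close>

lemma not_regular_if_combs_proportional:
  assumes red: "\<And>t. t \<in> basis4 \<Longrightarrow> reduces_to (J4 x1 x2 x3 x4 x5 x6) combs4 t"
    and l: "labelling a b c d" "labelling a' b' c' d'" and ne: "[a,b,c,d] \<noteq> [a',b',c',d']"
    and proportional: "unitv (S5 a b c d) - fscale k (unitv (S5 a' b' c' d')) \<in> J4 x1 x2 x3 x4 x5 x6"
  shows "\<not> regular_arity4 x1 x2 x3 x4 x5 (x6 :: 'a::field)"
proof (rule not_regular_if_few_monomials_suffice)
  let ?M = "combs4 - {S5 a b c d}"
  have fin: "finite combs4" and card: "card combs4 \<le> 24"
    unfolding combs4_def by (rule card_labelled_le)+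
  show "finite ?M" using fin by simp
  show "?M \<subseteq> basis4" unfolding combs4_def by auto
  show "card ?M < 24" using card l(1) fin by (simp add: combs4_def)
  have "S5 a' b' c' d' \<in> ?M" using l(2) ne by (auto simp: combs4_def)
  then have comb_red: "reduces_to (J4 x1 x2 x3 x4 x5 x6) ?M (S5 a b c d)"
    by (rule reduces_to_step[OF proportional reduces_to_self])
  fix t assume "t \<in> basis4"
  then obtain m r where m: "m \<in> combs4" and t: "unitv t - fscale r (unitv m) \<in> J4 x1 x2 x3 x4 x5 x6"
    using red unfolding reduces_to_def by blast
  show "reduces_to (J4 x1 x2 x3 x4 x5 x6) ?M t"
  proof (cases "m = S5 a b c d")
    case True then show ?thesis using reduces_to_step[OF t] comb_red by simp
  next
    case False then show ?thesis using m t unfolding reduces_to_def by blast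
  qed
qed

section \<open>Normal forms and regularity\<close>

definition comb :: "nat list \<Rightarrow> tree" where
  "comb w = S5 (w!0) (w!1) (w!2) (w!3)"

text \<open>A normal form assigns to each monomial t a labelling word nfw t and a scalar nfc t, meant as
  t \<equiv> nfc t \<cdot> comb (nfw t) modulo J(4); nf_coeff nfw nfc \<tau> reads off the coefficient of
  comb (word4 \<tau>).\<close>

definition nf_coeff :: "(tree \<Rightarrow> nat list) \<Rightarrow> (tree \<Rightarrow> 'a) \<Rightarrow> (nat \<Rightarrow> nat) \<Rightarrow> tree \<Rightarrow> 'a::field" where
  "nf_coeff nfw nfc \<tau> t = (if nfw t = word4 \<tau> then nfc t else 0)"

definition nf_map :: "(tree \<Rightarrow> nat list) \<Rightarrow> (tree \<Rightarrow> 'a) \<Rightarrow> (tree \<Rightarrow> 'a) \<Rightarrow> (nat \<Rightarrow> nat) \<Rightarrow> 'a::field" where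
  "nf_map nfw nfc v = (\<lambda>\<tau>. if \<tau> \<in> perms4 then pairing (nf_coeff nfw nfc \<tau>) v else 0)"

lemma comb_inj: "length w = 4 \<Longrightarrow> length w' = 4 \<Longrightarrow> comb w = comb w' \<Longrightarrow> w = w'"
  using length_4_cases[of w] length_4_cases[of w'] by (auto simp: comb_def)

lemma comb_in_basis4: "\<tau> \<in> perms4 \<Longrightarrow> comb (word4 \<tau>) \<in> basis4"
  using word4_labelling[of \<tau>] unfolding basis4_def comb_def word4_def by simp

lemma map_eq_iff_eq_map_inv:
  assumes "\<sigma> permutes A" shows "map \<sigma> xs = ys \<longleftrightarrow> xs = map (inv \<sigma>) ys"
  using permutes_inv_o[OF assms] by (auto simp: map_map)

lemma nf_map_image:
  assumes comb_nf: "\<And>\<tau>. \<tau> \<in> perms4 \<Longrightarrow> nfw (comb (word4 \<tau>)) = word4 \<tau> \<and> nfc (comb (word4 \<tau>)) = 1"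
  shows "nf_map nfw nfc ` T4 = FS4"
proof
  show "nf_map nfw nfc ` T4 \<subseteq> FS4" unfolding nf_map_def FS4_def perms4_def by (auto split: if_splits)
  show "FS4 \<subseteq> nf_map nfw nfc ` T4"
  proof
    fix f :: "(nat \<Rightarrow> nat) \<Rightarrow> 'a" assume f: "f \<in> FS4"
    define v where "v = (\<Sum>\<tau>\<in>perms4. fscale (f \<tau>) (unitv (comb (word4 \<tau>)) :: tree \<Rightarrow> 'a))"
    have "v \<in> T4" unfolding v_def
      by (intro FV.subspace_sum[OF T4_subspace] FV.subspace_scale[OF T4_subspace] unitv_in_T4 comb_in_basis4)
    moreover have "nf_map nfw nfc v \<rho> = f \<rho>" for \<rho>
    proof (cases "\<rho> \<in> perms4")
      case True
      have "pairing (nf_coeff nfw nfc \<rho>) v = (\<Sum>\<tau>\<in>perms4. f \<tau> * nf_coeff nfw nfc \<rho> (comb (word4 \<tau>)))"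
        unfolding v_def by (simp add: pairing_sum finite_perms4 comb_in_basis4)
      also have "\<dots> = (\<Sum>\<tau>\<in>perms4. if \<tau> = \<rho> then f \<rho> else 0)"
        using word4_inj[OF _ True] by (intro sum.cong refl) (auto simp: nf_coeff_def comb_nf True)
      also have "\<dots> = f \<rho>" using True finite_perms4 by simp
      finally show ?thesis using True unfolding nf_map_def by simp
    next
      case False
      then show ?thesis using f unfolding nf_map_def FS4_def perms4_def by auto
    qed
    ultimately show "f \<in> nf_map nfw nfc ` T4" by (metis image_eqI ext)
  qed
qed

lemma nf_map_equivariant:
  assumes equivariant:
      "\<And>\<sigma> t. \<sigma> permutes {1..4} \<Longrightarrow> t \<in> basis4 \<Longrightarrow> nfw (relabel \<sigma> t) = map \<sigma> (nfw t) \<and> nfc (relabel \<sigma> t) = nfc t"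
    and p: "\<sigma> permutes {1..4}"
  shows "nf_map nfw nfc (actT \<sigma> v) = actS \<sigma> (nf_map nfw nfc v)"
proof
  fix \<tau>
  have perm_iff: "\<tau> \<in> perms4 \<longleftrightarrow> inv \<sigma> \<circ> \<tau> \<in> perms4"
    using permutes_compose[OF _ permutes_inv[OF p], of \<tau>] permutes_compose[OF _ p, of "inv \<sigma> \<circ> \<tau>"]
    by (auto simp: perms4_def o_assoc permutes_inv_o[OF p])
  have "pairing (nf_coeff nfw nfc \<tau>) (actT \<sigma> v)
      = (\<Sum>t\<in>basis4. v (relabel (inv \<sigma>) t) * nf_coeff nfw nfc \<tau> t)"
    unfolding pairing_def actT_def ..
  also have "\<dots> = (\<Sum>t\<in>basis4. v (relabel (inv \<sigma>) (relabel \<sigma> t)) * nf_coeff nfw nfc \<tau> (relabel \<sigma> t))"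
    by (rule sum.reindex_bij_betw[OF bij_betw_relabel[OF p], symmetric])
  also have "\<dots> = (\<Sum>t\<in>basis4. v t * nf_coeff nfw nfc (inv \<sigma> \<circ> \<tau>) t)"
  proof (intro sum.cong refl)
    fix t assume t: "t \<in> basis4"
    have "relabel (inv \<sigma>) (relabel \<sigma> t) = t"
      by (simp add: relabel_comp permutes_inv_o[OF p] relabel_id)
    moreover have "nf_coeff nfw nfc \<tau> (relabel \<sigma> t) = nf_coeff nfw nfc (inv \<sigma> \<circ> \<tau>) t"
      unfolding nf_coeff_def using equivariant[OF p t] map_eq_iff_eq_map_inv[OF p]
      by (simp add: word4_eq_map)
    ultimately show "v (relabel (inv \<sigma>) (relabel \<sigma> t)) * nf_coeff nfw nfc \<tau> (relabel \<sigma> t)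
        = v t * nf_coeff nfw nfc (inv \<sigma> \<circ> \<tau>) t" by simp
  qed
  finally show "nf_map nfw nfc (actT \<sigma> v) \<tau> = actS \<sigma> (nf_map nfw nfc v) \<tau>"
    using perm_iff unfolding nf_map_def actS_def pairing_def by simp
qed

lemma J4_subset_nf_kernel:
  assumes "\<And>g \<tau>. g \<in> J4gens x1 x2 x3 x4 x5 x6 \<Longrightarrow> \<tau> \<in> perms4 \<Longrightarrow> pairing (nf_coeff nfw nfc \<tau>) g = 0"
    and "v \<in> J4 x1 x2 x3 x4 x5 x6"
  shows "nf_map nfw nfc v = (\<lambda>_. 0)"
  using pairing_vanishes_on_J4[OF assms(1)] assms(2) unfolding nf_map_def by auto

lemma normal_form_vanishes:
  fixes nfc :: "tree \<Rightarrow> 'a::field"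
  assumes words: "\<And>t. t \<in> basis4 \<Longrightarrow> distinct (nfw t) \<and> set (nfw t) = {1..4}"
    and v: "nf_map nfw nfc v = (\<lambda>_. 0)"
  shows "(\<Sum>t\<in>basis4. v t * fscale (nfc t) (unitv (comb (nfw t))) x) = 0"
proof (cases "\<exists>\<tau>\<in>perms4. x = comb (word4 \<tau>)")
  case True
  then obtain \<tau> where \<tau>: "\<tau> \<in> perms4" "x = comb (word4 \<tau>)" by blast
  have "(\<Sum>t\<in>basis4. v t * fscale (nfc t) (unitv (comb (nfw t))) x)
      = (\<Sum>t\<in>basis4. v t * nf_coeff nfw nfc \<tau> t)"
  proof (intro sum.cong refl)
    fix t assume t: "t \<in> basis4"
    have "comb (word4 \<tau>) = comb (nfw t) \<longleftrightarrow> nfw t = word4 \<tau>"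
      using comb_inj length_labelling_word words[OF t] by (fastforce simp: word4_def)
    then show "v t * fscale (nfc t) (unitv (comb (nfw t))) x = v t * nf_coeff nfw nfc \<tau> t"
      unfolding nf_coeff_def unitv_def \<tau>(2) fscale_apply by simp
  qed
  also have "\<dots> = nf_map nfw nfc v \<tau>" unfolding nf_map_def pairing_def using \<tau> by simp
  finally show ?thesis using v by simp
next
  case False
  have "x \<noteq> comb (nfw t)" if t: "t \<in> basis4" for t
  proof -
    have "perm_of_word (nfw t) \<in> perms4" "word4 (perm_of_word (nfw t)) = nfw t"
      using perm_of_word_in_perms4 word4_perm_of_word length_labelling_word words[OF t] by blast+
    then show ?thesis using False by metis
  qed
  then show ?thesis by (simp add: unitv_def)
qed

lemma nf_kernel_subset_J4:
  fixes nfc :: "tree \<Rightarrow> 'a::field"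
  assumes words: "\<And>t. t \<in> basis4 \<Longrightarrow> distinct (nfw t) \<and> set (nfw t) = {1..4}"
    and reduce: "\<And>t. t \<in> basis4 \<Longrightarrow> unitv t - fscale (nfc t) (unitv (comb (nfw t))) \<in> J4 x1 x2 x3 x4 x5 x6"
    and v: "v \<in> T4" "nf_map nfw nfc v = (\<lambda>_. 0)"
  shows "v \<in> J4 x1 x2 x3 x4 x5 x6"
proof -
  define R where "R t = fscale (nfc t) (unitv (comb (nfw t)) :: tree \<Rightarrow> 'a)" for t
  have "v = (\<Sum>t\<in>basis4. fscale (v t) (unitv t - R t))"
  proof
    fix x
    have "(\<Sum>t\<in>basis4. fscale (v t) (unitv t - R t)) x
        = (\<Sum>t\<in>basis4. fscale (v t) (unitv t)) x - (\<Sum>t\<in>basis4. v t * R t x)"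
      by (simp add: sum_fun_apply finite_basis4 algebra_simps sum_subtractf)
    also have "\<dots> = v x"
      using normal_form_vanishes[OF words v(2)] T4_eq_sum_unitv[OF v(1)] unfolding R_def by simp
    finally show "v x = (\<Sum>t\<in>basis4. fscale (v t) (unitv t - R t)) x" by simp
  qed
  also have "\<dots> \<in> J4 x1 x2 x3 x4 x5 x6"
    using reduce[unfolded J4_eq_span] unfolding J4_eq_span R_def by (intro FV.span_sum FV.span_scale) auto
  finally show ?thesis .
qed

lemma regular_if_normal_form:
  fixes nfc :: "tree \<Rightarrow> 'a::field" and nfw :: "tree \<Rightarrow> nat list"
  assumes equivariant:
      "\<And>\<sigma> t. \<sigma> permutes {1..4} \<Longrightarrow> t \<in> basis4 \<Longrightarrow> nfw (relabel \<sigma> t) = map \<sigma> (nfw t) \<and> nfc (relabel \<sigma> t) = nfc t"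
    and words: "\<And>t. t \<in> basis4 \<Longrightarrow> distinct (nfw t) \<and> set (nfw t) = {1..4}"
    and comb_nf: "\<And>\<tau>. \<tau> \<in> perms4 \<Longrightarrow> nfw (comb (word4 \<tau>)) = word4 \<tau> \<and> nfc (comb (word4 \<tau>)) = 1"
    and gens: "\<And>g \<tau>. g \<in> J4gens x1 x2 x3 x4 x5 x6 \<Longrightarrow> \<tau> \<in> perms4 \<Longrightarrow> pairing (nf_coeff nfw nfc \<tau>) g = 0"
    and reduce: "\<And>t. t \<in> basis4 \<Longrightarrow> unitv t - fscale (nfc t) (unitv (comb (nfw t))) \<in> J4 x1 x2 x3 x4 x5 x6"
  shows "regular_arity4 x1 x2 x3 x4 x5 x6"
  unfolding regular_arity4_def
proof (intro exI[of _ "nf_map nfw nfc"] conjI ballI allI impI)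
  show "nf_map nfw nfc (\<lambda>t. u t + v t) = (\<lambda>\<tau>. nf_map nfw nfc u \<tau> + nf_map nfw nfc v \<tau>)"
    and "nf_map nfw nfc (\<lambda>t. c * u t) = (\<lambda>\<tau>. c * nf_map nfw nfc u \<tau>)" for u v :: "tree \<Rightarrow> 'a" and c
    by (simp_all add: nf_map_def fun_eq_iff pairing_def algebra_simps sum.distrib sum_distrib_left)
  show "nf_map nfw nfc ` T4 = FS4" by (rule nf_map_image[OF comb_nf])
  show "nf_map nfw nfc (actT \<sigma> v) = actS \<sigma> (nf_map nfw nfc v)" if "\<sigma> permutes {1..4}" for \<sigma> v
    by (rule nf_map_equivariant[OF equivariant that])
  show "{v \<in> T4. nf_map nfw nfc v = (\<lambda>_. 0)} = J4 x1 x2 x3 x4 x5 x6"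
    using J4_subset_nf_kernel[OF gens] nf_kernel_subset_J4[OF words reduce] J4_subset_T4 by blast
qed

text \<open>Together with the 24 coefficient functionals, k gives 25 functionals vanishing on J(4) that are
  biorthogonal to t' and the combs.\<close>

lemma not_regular_if_extra_functional:
  fixes nfc :: "tree \<Rightarrow> 'a::field" and nfw :: "tree \<Rightarrow> nat list"
  assumes comb_nf: "\<And>\<tau>. \<tau> \<in> perms4 \<Longrightarrow> nfw (comb (word4 \<tau>)) = word4 \<tau> \<and> nfc (comb (word4 \<tau>)) = 1"
    and gens: "\<And>g \<tau>. g \<in> J4gens x1 x2 x3 x4 x5 x6 \<Longrightarrow> \<tau> \<in> perms4 \<Longrightarrow> pairing (nf_coeff nfw nfc \<tau>) g = 0"
    and t': "t' \<in> basis4" "nfc t' = 0"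
    and k_gens: "\<And>g. g \<in> J4gens x1 x2 x3 x4 x5 x6 \<Longrightarrow> pairing k g = 0"
    and k_extra: "k t' = 1" and k_combs: "\<And>\<tau>. \<tau> \<in> perms4 \<Longrightarrow> k (comb (word4 \<tau>)) = 0"
  shows "\<not> regular_arity4 x1 x2 x3 x4 x5 x6"
proof (rule not_regular_if_separating_functionals[where I = "insert None (Some ` perms4)"
      and w = "\<lambda>i. case i of None \<Rightarrow> unitv t' | Some \<tau> \<Rightarrow> unitv (comb (word4 \<tau>))"
      and k = "\<lambda>i. case i of None \<Rightarrow> k | Some \<tau> \<Rightarrow> nf_coeff nfw nfc \<tau>"])
  show "finite (insert None (Some ` perms4))" using finite_perms4 by simp
  show "24 < card (insert None (Some ` perms4))"
    using finite_perms4 card_perms4 by (simp add: card_image)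
  show "(case i of None \<Rightarrow> unitv t' | Some \<tau> \<Rightarrow> unitv (comb (word4 \<tau>))) \<in> T4"
    if "i \<in> insert None (Some ` perms4)" for i
    using that t' by (auto intro!: unitv_in_T4 comb_in_basis4)
  show "pairing (case i of None \<Rightarrow> k | Some \<tau> \<Rightarrow> nf_coeff nfw nfc \<tau>) g = 0"
    if "i \<in> insert None (Some ` perms4)" "g \<in> J4gens x1 x2 x3 x4 x5 x6" for i g
    using that k_gens gens by auto
  show "pairing (case i of None \<Rightarrow> k | Some \<tau> \<Rightarrow> nf_coeff nfw nfc \<tau>)
      (case j of None \<Rightarrow> unitv t' | Some \<tau> \<Rightarrow> unitv (comb (word4 \<tau>))) = (if i = j then 1 else 0)"
    if "i \<in> insert None (Some ` perms4)" "j \<in> insert None (Some ` perms4)" for i j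
    using that t' k_extra k_combs word4_inj comb_nf
    by (auto simp: comb_in_basis4 nf_coeff_def split: option.split)
qed

lemma J4_relations_x1:
  assumes l: "labelling a b c d"
  shows "unitv (S1 a b c d) - fscale s (unitv (S2 a b c d)) \<in> J4 s 0 0 0 0 0"
    and "unitv (S4 a b c d) - fscale s (unitv (S5 a b c d)) \<in> J4 s 0 0 0 0 0"
    and "unitv (S1 a b c d) - fscale s (unitv (S3 a b c d)) \<in> J4 s 0 0 0 0 0"
    and "unitv (S2 a b c d) - fscale s (unitv (S4 a b c d)) \<in> J4 s 0 0 0 0 0"
    and "unitv (S3 a b c d) - fscale s (unitv (S5 a b c d)) \<in> J4 s 0 0 0 0 0"
  using Jgen_in_J4[OF l, of s 0 0 0 0 0] Jgen_in_J4(2)[of b c d a s 0 0 0 0 0] labelling_permute[OF l]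
  by (simp_all add: Jgen_defs)

lemma J4_relations_x2:
  assumes l: "labelling a b c d"
  shows "unitv (S1 a b c d) - fscale s (unitv (S2 a c b d)) \<in> J4 0 s 0 0 0 0"
    and "unitv (S4 a b c d) - fscale s (unitv (S5 a b d c)) \<in> J4 0 s 0 0 0 0"
    and "unitv (S1 a b c d) - fscale s (unitv (S3 a b d c)) \<in> J4 0 s 0 0 0 0"
    and "unitv (S2 a b c d) - fscale s (unitv (S5 a d b c)) \<in> J4 0 s 0 0 0 0"
    and "unitv (S3 a b c d) - fscale s (unitv (S4 a c d b)) \<in> J4 0 s 0 0 0 0"
  using Jgen_in_J4[OF l, of 0 s 0 0 0 0] Jgen_in_J4(2)[of b c d a 0 s 0 0 0 0] labelling_permute[OF l]
  by (simp_all add: Jgen_defs)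

lemma J4_relations_x3:
  assumes l: "labelling a b c d"
  shows "unitv (S1 a b c d) - fscale s (unitv (S2 b a c d)) \<in> J4 0 0 s 0 0 0"
    and "unitv (S4 a b c d) - fscale s (unitv (S5 a c b d)) \<in> J4 0 0 s 0 0 0"
    and "unitv (S1 a b c d) - fscale s (unitv (S4 c a b d)) \<in> J4 0 0 s 0 0 0"
    and "unitv (S2 a b c d) - fscale s (unitv (S3 b c a d)) \<in> J4 0 0 s 0 0 0"
    and "unitv (S3 a b c d) - fscale s (unitv (S5 b a c d)) \<in> J4 0 0 s 0 0 0"
  using Jgen_in_J4[OF l, of 0 0 s 0 0 0] Jgen_in_J4(2)[of b c d a 0 0 s 0 0 0] labelling_permute[OF l]
  by (simp_all add: Jgen_defs)

lemma J4_relations_x4: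
  assumes l: "labelling a b c d"
  shows "unitv (S1 a b c d) - fscale s (unitv (S2 b c a d)) \<in> J4 0 0 0 s 0 0"
    and "unitv (S4 a b c d) - fscale s (unitv (S5 a c d b)) \<in> J4 0 0 0 s 0 0"
    and "unitv (S1 a b c d) - fscale s (unitv (S5 c d a b)) \<in> J4 0 0 0 s 0 0"
    and "unitv (S2 a b c d) - fscale s (unitv (S3 b c d a)) \<in> J4 0 0 0 s 0 0"
    and "unitv (S3 a b c d) - fscale s (unitv (S4 b c d a)) \<in> J4 0 0 0 s 0 0"
  using Jgen_in_J4[OF l, of 0 0 0 s 0 0] Jgen_in_J4(2)[of b c d a 0 0 0 s 0 0] labelling_permute[OF l]
  by (simp_all add: Jgen_defs)

lemma J4_relations_x5:
  assumes l: "labelling a b c d"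
  shows "unitv (S1 a b c d) - fscale s (unitv (S2 c a b d)) \<in> J4 0 0 0 0 s 0"
    and "unitv (S4 a b c d) - fscale s (unitv (S5 a d b c)) \<in> J4 0 0 0 0 s 0"
    and "unitv (S1 a b c d) - fscale s (unitv (S4 d a b c)) \<in> J4 0 0 0 0 s 0"
    and "unitv (S2 a b c d) - fscale s (unitv (S5 d a b c)) \<in> J4 0 0 0 0 s 0"
    and "unitv (S3 a b c d) - fscale s (unitv (S3 c d a b)) \<in> J4 0 0 0 0 s 0"
  using Jgen_in_J4[OF l, of 0 0 0 0 s 0] Jgen_in_J4(2)[of b c d a 0 0 0 0 s 0] labelling_permute[OF l]
  by (simp_all add: Jgen_defs)

lemma J4_relations_x6:
  assumes l: "labelling a b c d"
  shows "unitv (S1 a b c d) - fscale s (unitv (S2 c b a d)) \<in> J4 0 0 0 0 0 s"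
    and "unitv (S4 a b c d) - fscale s (unitv (S5 a d c b)) \<in> J4 0 0 0 0 0 s"
    and "unitv (S1 a b c d) - fscale s (unitv (S5 d c a b)) \<in> J4 0 0 0 0 0 s"
    and "unitv (S2 a b c d) - fscale s (unitv (S4 d b c a)) \<in> J4 0 0 0 0 0 s"
    and "unitv (S3 a b c d) - fscale s (unitv (S3 c d b a)) \<in> J4 0 0 0 0 0 s"
  using Jgen_in_J4[OF l, of 0 0 0 0 0 s] Jgen_in_J4(2)[of b c d a 0 0 0 0 0 s] labelling_permute[OF l]
  by (simp_all add: Jgen_defs)

lemma reduces_to_comb:
  "labelling a b c d \<Longrightarrow> unitv t - fscale k (unitv (S5 a b c d)) \<in> J4 x1 x2 x3 x4 x5 x6 \<Longrightarrow>
    reduces_to (J4 x1 x2 x3 x4 x5 x6) combs4 t"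
  by (rule reduces_to_step, assumption, rule reduces_to_self) (auto simp: combs4_def)

section \<open>Nonzero first coordinate\<close>

lemma nf_coeff_x1_vanishes:
  assumes "g \<in> J4gens 1 0 0 0 0 0"
  shows "pairing (nf_coeff leaves (\<lambda>_. 1) \<tau>) g = (0::'a::field)"
proof -
  obtain a b c d where l: "labelling a b c d" and g: "g = Jgen1 1 0 0 0 0 0 a b c d
      \<or> g = Jgen2 1 0 0 0 0 0 a b c d \<or> g = Jgen3 1 0 0 0 0 0 a b c d
      \<or> g = Jgen4 1 0 0 0 0 0 a b c d \<or> g = Jgen5 1 0 0 0 0 0 a b c d"
    using assms by (rule J4gens_cases)
  from g show ?thesis using labelling_distinct[OF l]
    by (elim disjE) (simp_all add: Jgen_defs nf_coeff_def labelling_iff)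
qed

lemma reduce_x1:
  assumes "t \<in> basis4"
  shows "unitv t - unitv (comb (leaves t)) \<in> J4 1 0 0 0 0 (0::'a::field)"
  using assms
proof (cases rule: basis4_cases)
  case (1 a b c d)
  note r = J4_relations_x1[OF 1(1), of 1]
  have "unitv (S1 a b c d) - fscale 1 (unitv (S4 a b c d)) \<in> J4 1 0 0 0 0 (0::'a)"
    by (rule J4_combine[OF r(1) r(4), where c=1]) (simp add: fun_eq_iff)
  then have "unitv (S1 a b c d) - fscale 1 (unitv (S5 a b c d)) \<in> J4 1 0 0 0 0 (0::'a)"
    by (rule J4_combine[OF _ r(2), where c=1]) (simp add: fun_eq_iff)
  then show ?thesis using 1 by (simp add: comb_def)
next
  case (2 a b c d)
  note r = J4_relations_x1[OF 2(1), of 1]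
  have "unitv (S2 a b c d) - fscale 1 (unitv (S5 a b c d)) \<in> J4 1 0 0 0 0 (0::'a)"
    by (rule J4_combine[OF r(4) r(2), where c=1]) (simp add: fun_eq_iff)
  then show ?thesis using 2 by (simp add: comb_def)
qed (use J4_relations_x1[of _ _ _ _ 1] zero_in_J4 in \<open>simp_all add: comb_def\<close>)

theorem regular_x1: "regular_arity4 1 0 0 0 0 (0::'a::field)"
proof (rule regular_if_normal_form[where nfw=leaves and nfc="\<lambda>_. 1"])
  show "leaves (relabel \<sigma> t) = map \<sigma> (leaves t) \<and> (1::'a) = 1" for \<sigma> t
    by (simp add: leaves_relabel)
  show "distinct (leaves t) \<and> set (leaves t) = {1..4}" if "t \<in> basis4" for t
    using that by (simp add: basis4_def)
  show "leaves (comb (word4 \<tau>)) = word4 \<tau> \<and> (1::'a) = 1" for \<tau>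
    by (simp add: comb_def word4_def)
qed (simp_all add: nf_coeff_x1_vanishes reduce_x1)

text \<open>For s \<noteq> 1 the two ways of rewriting ((ab)c)d into a(b(cd)) give s^3 and s^2.\<close>

lemma comb_in_J4_x1:
  assumes s: "s \<noteq> 0" "s \<noteq> 1" and l: "labelling a b c d"
  shows "unitv (S5 a b c d) \<in> J4 s 0 0 0 0 (0::'a::field)"
proof -
  note r = J4_relations_x1[OF l, of s]
  have "unitv (S1 a b c d) - fscale (s*s) (unitv (S4 a b c d)) \<in> J4 s 0 0 0 0 (0::'a)"
    by (rule J4_combine[OF r(1) r(4), where c=s]) (simp add: fun_eq_iff algebra_simps)
  then have cube: "unitv (S1 a b c d) - fscale (s*s*s) (unitv (S5 a b c d)) \<in> J4 s 0 0 0 0 (0::'a)"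
    by (rule J4_combine[OF _ r(2), where c="s*s"]) (simp add: fun_eq_iff algebra_simps)
  have square: "unitv (S1 a b c d) - fscale (s*s) (unitv (S5 a b c d)) \<in> J4 s 0 0 0 0 (0::'a)"
    by (rule J4_combine[OF r(3) r(5), where c=s]) (simp add: fun_eq_iff algebra_simps)
  have diff: "fscale (s*s*s - s*s) (unitv (S5 a b c d)) \<in> J4 s 0 0 0 0 (0::'a)"
    by (rule J4_combine[OF square cube, where c="-1"]) (simp add: fun_eq_iff algebra_simps)
  have "s*s*s - s*s \<noteq> 0" using s by (simp add: algebra_simps)
  then show ?thesis
    by (intro J4_scale[OF diff, where c="inverse (s*s*s - s*s)"]) (simp add: fun_eq_iff)
qed

lemma unitv_in_J4_x1:
  assumes s: "s \<noteq> 0" "s \<noteq> 1" and t: "t \<in> basis4"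
  shows "unitv t \<in> J4 s 0 0 0 0 (0::'a::field)"
proof -
  have S5: "unitv (S5 a b c d) \<in> J4 s 0 0 0 0 (0::'a)" if "labelling a b c d" for a b c d
    using comb_in_J4_x1[OF s that] .
  have S4: "unitv (S4 a b c d) \<in> J4 s 0 0 0 0 (0::'a)" if l: "labelling a b c d" for a b c d
    by (rule J4_combine[OF J4_relations_x1(2)[OF l] S5[OF l], where c=s]) (simp add: fun_eq_iff)
  have S3: "unitv (S3 a b c d) \<in> J4 s 0 0 0 0 (0::'a)" if l: "labelling a b c d" for a b c d
    by (rule J4_combine[OF J4_relations_x1(5)[OF l] S5[OF l], where c=s]) (simp add: fun_eq_iff)
  have S2: "unitv (S2 a b c d) \<in> J4 s 0 0 0 0 (0::'a)" if l: "labelling a b c d" for a b c d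
    by (rule J4_combine[OF J4_relations_x1(4)[OF l] S4[OF l], where c=s]) (simp add: fun_eq_iff)
  have S1: "unitv (S1 a b c d) \<in> J4 s 0 0 0 0 (0::'a)" if l: "labelling a b c d" for a b c d
    by (rule J4_combine[OF J4_relations_x1(1)[OF l] S2[OF l], where c=s]) (simp add: fun_eq_iff)
  from t show ?thesis by (cases rule: basis4_cases) (simp_all add: S1 S2 S3 S4 S5)
qed

theorem not_regular_x1:
  assumes "s \<noteq> 0" "s \<noteq> 1"
  shows "\<not> regular_arity4 s 0 0 0 0 (0::'a::field)"
  by (rule not_regular_if_few_monomials_suffice[where M = "{S5 1 2 3 4}"])
    (auto intro: reduces_to_if_in_J4 unitv_in_J4_x1[OF assms] simp: labelling_iff)

section \<open>Nonzero second, third or fourth coordinate\<close>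

lemma S1_to_comb_x2:
  assumes l: "labelling a b c d"
  shows "unitv (S1 a b c d) - fscale (s*s) (unitv (S5 a d c b)) \<in> J4 0 s 0 0 0 0"
  using labelling_permute[OF l]
  by (intro J4_combine[OF J4_relations_x2(1)[OF l] J4_relations_x2(4)[of a c b d], where c=s])
    (simp_all add: fun_eq_iff algebra_simps)

lemma S3_to_comb_x2:
  assumes l: "labelling a b c d"
  shows "unitv (S3 a b c d) - fscale (s*s) (unitv (S5 a c b d)) \<in> J4 0 s 0 0 0 0"
  using labelling_permute[OF l]
  by (intro J4_combine[OF J4_relations_x2(5)[OF l] J4_relations_x2(2)[of a c d b], where c=s])
    (simp_all add: fun_eq_iff algebra_simps)

lemma reduces_to_combs_x2:
  assumes "t \<in> basis4" shows "reduces_to (J4 0 s 0 0 0 0) combs4 t"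
  using assms
proof (cases rule: basis4_cases)
  case (1 a b c d) then show ?thesis
    using reduces_to_comb[OF _ S1_to_comb_x2[OF 1(1)]] labelling_permute[OF 1(1)] by simp
next
  case (2 a b c d) then show ?thesis
    using reduces_to_comb[OF _ J4_relations_x2(4)[OF 2(1)]] labelling_permute[OF 2(1)] by simp
next
  case (3 a b c d) then show ?thesis
    using reduces_to_comb[OF _ S3_to_comb_x2[OF 3(1)]] labelling_permute[OF 3(1)] by simp
next
  case (4 a b c d) then show ?thesis
    using reduces_to_comb[OF _ J4_relations_x2(2)[OF 4(1)]] labelling_permute[OF 4(1)] by simp
next
  case (5 a b c d) then show ?thesis by (simp add: reduces_to_self combs4_def)
qed

lemma combs_proportional_x2:
  assumes s: "s \<noteq> 0" and l: "labelling a b c d"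
  shows "unitv (S5 a b c d) - fscale (inverse s) (unitv (S5 a b d c)) \<in> J4 0 s 0 0 0 0"
proof -
  have l': "labelling a c d b" "labelling a c b d" using labelling_permute[OF l] by blast+
  have "unitv (S1 a c d b) - fscale (s*s*s) (unitv (S5 a b c d)) \<in> J4 0 s 0 0 0 0"
    by (rule J4_combine[OF J4_relations_x2(3)[OF l'(1)] S3_to_comb_x2[OF l'(2)], where c=s])
      (simp add: fun_eq_iff algebra_simps)
  then have "fscale (s*s*s) (unitv (S5 a b c d)) - fscale (s*s) (unitv (S5 a b d c)) \<in> J4 0 s 0 0 0 0"
    by (rule J4_combine[OF S1_to_comb_x2[OF l'(1)], where c="-1"]) (simp add: fun_eq_iff algebra_simps)
  then show ?thesis
    by (rule J4_scale[where c="inverse (s*s*s)"]) (use s in \<open>simp add: fun_eq_iff field_simps\<close>)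
qed

theorem not_regular_x2:
  assumes "s \<noteq> 0" shows "\<not> regular_arity4 0 s 0 0 0 (0::'a::field)"
  using not_regular_if_combs_proportional[OF reduces_to_combs_x2 _ _ _
      combs_proportional_x2[OF assms, of 1 2 3 4]]
  by (simp add: labelling_iff)

lemma S1_to_comb_x3:
  assumes l: "labelling a b c d"
  shows "unitv (S1 a b c d) - fscale (s*s) (unitv (S5 c b a d)) \<in> J4 0 0 s 0 0 0"
  using labelling_permute[OF l]
  by (intro J4_combine[OF J4_relations_x3(3)[OF l] J4_relations_x3(2)[of c a b d], where c=s])
    (simp_all add: fun_eq_iff algebra_simps)

lemma S2_to_comb_x3:
  assumes l: "labelling a b c d"
  shows "unitv (S2 a b c d) - fscale (s*s) (unitv (S5 c b a d)) \<in> J4 0 0 s 0 0 0"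
  using labelling_permute[OF l]
  by (intro J4_combine[OF J4_relations_x3(4)[OF l] J4_relations_x3(5)[of b c a d], where c=s])
    (simp_all add: fun_eq_iff algebra_simps)

lemma reduces_to_combs_x3:
  assumes "t \<in> basis4" shows "reduces_to (J4 0 0 s 0 0 0) combs4 t"
  using assms
proof (cases rule: basis4_cases)
  case (1 a b c d) then show ?thesis
    using reduces_to_comb[OF _ S1_to_comb_x3[OF 1(1)]] labelling_permute[OF 1(1)] by simp
next
  case (2 a b c d) then show ?thesis
    using reduces_to_comb[OF _ S2_to_comb_x3[OF 2(1)]] labelling_permute[OF 2(1)] by simp
next
  case (3 a b c d) then show ?thesis
    using reduces_to_comb[OF _ J4_relations_x3(5)[OF 3(1)]] labelling_permute[OF 3(1)] by simp
next
  case (4 a b c d) then show ?thesis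
    using reduces_to_comb[OF _ J4_relations_x3(2)[OF 4(1)]] labelling_permute[OF 4(1)] by simp
next
  case (5 a b c d) then show ?thesis by (simp add: reduces_to_self combs4_def)
qed

lemma combs_proportional_x3:
  assumes s: "s \<noteq> 0" and l: "labelling a b c d"
  shows "unitv (S5 a b c d) - fscale (inverse s) (unitv (S5 a c b d)) \<in> J4 0 0 s 0 0 0"
proof -
  have l': "labelling b c a d" "labelling c b a d" using labelling_permute[OF l] by blast+
  have "unitv (S1 b c a d) - fscale (s*s*s) (unitv (S5 a b c d)) \<in> J4 0 0 s 0 0 0"
    by (rule J4_combine[OF J4_relations_x3(1)[OF l'(1)] S2_to_comb_x3[OF l'(2)], where c=s])
      (simp add: fun_eq_iff algebra_simps)
  then have "fscale (s*s*s) (unitv (S5 a b c d)) - fscale (s*s) (unitv (S5 a c b d)) \<in> J4 0 0 s 0 0 0"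
    by (rule J4_combine[OF S1_to_comb_x3[OF l'(1)], where c="-1"]) (simp add: fun_eq_iff algebra_simps)
  then show ?thesis
    by (rule J4_scale[where c="inverse (s*s*s)"]) (use s in \<open>simp add: fun_eq_iff field_simps\<close>)
qed

theorem not_regular_x3:
  assumes "s \<noteq> 0" shows "\<not> regular_arity4 0 0 s 0 0 (0::'a::field)"
  using not_regular_if_combs_proportional[OF reduces_to_combs_x3 _ _ _
      combs_proportional_x3[OF assms, of 1 2 3 4]]
  by (simp add: labelling_iff)

lemma S3_to_comb_x4:
  assumes l: "labelling a b c d"
  shows "unitv (S3 a b c d) - fscale (s*s) (unitv (S5 b d a c)) \<in> J4 0 0 0 s 0 0"
  using labelling_permute[OF l]
  by (intro J4_combine[OF J4_relations_x4(5)[OF l] J4_relations_x4(2)[of b c d a], where c=s])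
    (simp_all add: fun_eq_iff algebra_simps)

lemma S2_to_comb_x4:
  assumes l: "labelling a b c d"
  shows "unitv (S2 a b c d) - fscale (s*s*s) (unitv (S5 c a b d)) \<in> J4 0 0 0 s 0 0"
  using labelling_permute[OF l]
  by (intro J4_combine[OF J4_relations_x4(4)[OF l] S3_to_comb_x4[of b c d a], where c=s])
    (simp_all add: fun_eq_iff algebra_simps)

lemma reduces_to_combs_x4:
  assumes "t \<in> basis4" shows "reduces_to (J4 0 0 0 s 0 0) combs4 t"
  using assms
proof (cases rule: basis4_cases)
  case (1 a b c d) then show ?thesis
    using reduces_to_comb[OF _ J4_relations_x4(3)[OF 1(1)]] labelling_permute[OF 1(1)] by simp
next
  case (2 a b c d) then show ?thesis
    using reduces_to_comb[OF _ S2_to_comb_x4[OF 2(1)]] labelling_permute[OF 2(1)] by simp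
next
  case (3 a b c d) then show ?thesis
    using reduces_to_comb[OF _ S3_to_comb_x4[OF 3(1)]] labelling_permute[OF 3(1)] by simp
next
  case (4 a b c d) then show ?thesis
    using reduces_to_comb[OF _ J4_relations_x4(2)[OF 4(1)]] labelling_permute[OF 4(1)] by simp
next
  case (5 a b c d) then show ?thesis by (simp add: reduces_to_self combs4_def)
qed

lemma combs_proportional_x4:
  assumes s: "s \<noteq> 0" and l: "labelling a b c d"
  shows "unitv (S5 a b c d) - fscale (s*s*s) (unitv (S5 c d a b)) \<in> J4 0 0 0 s 0 0"
proof -
  have l': "labelling c d a b" "labelling d a c b" using labelling_permute[OF l] by blast+
  have "unitv (S1 c d a b) - fscale (s*s*s*s) (unitv (S5 c d a b)) \<in> J4 0 0 0 s 0 0"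
    by (rule J4_combine[OF J4_relations_x4(1)[OF l'(1)] S2_to_comb_x4[OF l'(2)], where c=s])
      (simp add: fun_eq_iff algebra_simps)
  then have "fscale (s*s*s*s) (unitv (S5 c d a b)) - fscale s (unitv (S5 a b c d)) \<in> J4 0 0 0 s 0 0"
    by (rule J4_combine[OF J4_relations_x4(3)[OF l'(1)], where c="-1"]) (simp add: fun_eq_iff algebra_simps)
  then show ?thesis
    by (rule J4_scale[where c="- inverse s"]) (use s in \<open>simp add: fun_eq_iff field_simps\<close>)
qed

theorem not_regular_x4:
  assumes "s \<noteq> 0" shows "\<not> regular_arity4 0 0 0 s 0 (0::'a::field)"
  using not_regular_if_combs_proportional[OF reduces_to_combs_x4 _ _ _
      combs_proportional_x4[OF assms, of 1 2 3 4]]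
  by (simp add: labelling_iff)

section \<open>Nonzero fifth coordinate\<close>

fun nfw5 :: "tree \<Rightarrow> nat list" where
  "nfw5 (Node (Node (Node (Leaf a) (Leaf b)) (Leaf c)) (Leaf d)) = [d,c,a,b]"
| "nfw5 (Node (Node (Leaf a) (Node (Leaf b) (Leaf c))) (Leaf d)) = [d,a,b,c]"
| "nfw5 (Node (Node (Leaf a) (Leaf b)) (Node (Leaf c) (Leaf d))) = [a,b,c,d]"
| "nfw5 (Node (Leaf a) (Node (Node (Leaf b) (Leaf c)) (Leaf d))) = [a,d,b,c]"
| "nfw5 (Node (Leaf a) (Node (Leaf b) (Node (Leaf c) (Leaf d)))) = [a,b,c,d]"
| "nfw5 _ = []"

text \<open>The coefficient of (ab)(cd) is 0: via (cd)(ab) it is congruent to s^2 (ab)(cd), so it lies in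
  J(4) when s^2 \<noteq> 1.\<close>

fun nfc5 :: "'a::field \<Rightarrow> tree \<Rightarrow> 'a" where
  "nfc5 s (Node (Node (Node (Leaf a) (Leaf b)) (Leaf c)) (Leaf d)) = s * s"
| "nfc5 s (Node (Node (Leaf a) (Node (Leaf b) (Leaf c))) (Leaf d)) = s"
| "nfc5 s (Node (Node (Leaf a) (Leaf b)) (Node (Leaf c) (Leaf d))) = 0"
| "nfc5 s (Node (Leaf a) (Node (Node (Leaf b) (Leaf c)) (Leaf d))) = s"
| "nfc5 s (Node (Leaf a) (Node (Leaf b) (Node (Leaf c) (Leaf d)))) = 1"
| "nfc5 s _ = 0"

lemma nf_coeff_x5_vanishes:
  assumes "g \<in> J4gens 0 0 0 0 s 0"
  shows "pairing (nf_coeff nfw5 (nfc5 s) \<tau>) g = 0"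
proof -
  obtain a b c d where l: "labelling a b c d" and g: "g = Jgen1 0 0 0 0 s 0 a b c d
      \<or> g = Jgen2 0 0 0 0 s 0 a b c d \<or> g = Jgen3 0 0 0 0 s 0 a b c d
      \<or> g = Jgen4 0 0 0 0 s 0 a b c d \<or> g = Jgen5 0 0 0 0 s 0 a b c d"
    using assms by (rule J4gens_cases)
  from g show ?thesis using labelling_distinct[OF l]
    by (elim disjE) (simp_all add: Jgen_defs nf_coeff_def labelling_iff)
qed

lemma nf5_equivariant:
  "\<sigma> permutes {1..4} \<Longrightarrow> t \<in> basis4 \<Longrightarrow>
    nfw5 (relabel \<sigma> t) = map \<sigma> (nfw5 t) \<and> nfc5 s (relabel \<sigma> t) = nfc5 s t"
  by (erule basis4_cases) simp_all

lemma nfw5_labelling: "t \<in> basis4 \<Longrightarrow> distinct (nfw5 t) \<and> set (nfw5 t) = {1..4}"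
  by (erule basis4_cases) (auto simp: labelling_def)

lemma nf5_comb: "nfw5 (comb (word4 \<tau>)) = word4 \<tau> \<and> nfc5 s (comb (word4 \<tau>)) = 1"
  by (simp add: comb_def word4_def)

lemma reduce_x5:
  assumes s: "s * s \<noteq> 1" and t: "t \<in> basis4"
  shows "unitv t - fscale (nfc5 s t) (unitv (comb (nfw5 t))) \<in> J4 0 0 0 0 s 0"
  using t
proof (cases rule: basis4_cases)
  case (1 a b c d)
  have "labelling d a b c" using labelling_permute[OF 1(1)] by blast
  then have "unitv (S1 a b c d) - fscale (s * s) (unitv (S5 d c a b)) \<in> J4 0 0 0 0 s 0"
    by (rule J4_combine[OF J4_relations_x5(3)[OF 1(1)] J4_relations_x5(2), where c=s])
      (simp add: fun_eq_iff algebra_simps)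
  then show ?thesis using 1 by (simp add: comb_def)
next
  case (2 a b c d)
  then show ?thesis using J4_relations_x5(4)[OF 2(1)] by (simp add: comb_def)
next
  case (3 a b c d)
  have "labelling c d a b" using labelling_permute[OF 3(1)] by blast
  then have "fscale (1 - s * s) (unitv (S3 a b c d)) \<in> J4 0 0 0 0 s 0"
    by (rule J4_combine[OF J4_relations_x5(5)[OF 3(1)] J4_relations_x5(5), where c=s])
      (simp add: fun_eq_iff algebra_simps)
  then have "unitv (S3 a b c d) \<in> J4 0 0 0 0 s 0"
    by (rule J4_scale[where c="inverse (1 - s * s)"]) (use s in \<open>simp add: fun_eq_iff\<close>)
  then show ?thesis using 3 by (simp add: comb_def)
next
  case (4 a b c d)
  then show ?thesis using J4_relations_x5(2)[OF 4(1)] by (simp add: comb_def)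
next
  case (5 a b c d)
  then show ?thesis using zero_in_J4 by (simp add: comb_def)
qed

theorem regular_x5:
  assumes "(s::'a::field) * s \<noteq> 1" shows "regular_arity4 0 0 0 0 s 0"
  by (rule regular_if_normal_form[where nfw=nfw5 and nfc="nfc5 s"])
    (simp_all add: nf5_equivariant nfw5_labelling nf5_comb nf_coeff_x5_vanishes reduce_x5[OF assms])

text \<open>For s = \<plusminus>1 the orbit of (12)(34) under (ab)(cd) \<mapsto> (cd)(ab) carries a further functional.\<close>

definition extra_functional_x5 :: "'a::field \<Rightarrow> tree \<Rightarrow> 'a" where
  "extra_functional_x5 s t = (if t = S3 1 2 3 4 then 1 else if t = S3 3 4 1 2 then s else 0)"

lemma extra_functional_x5_vanishes:
  assumes s: "s * s = 1" and g: "g \<in> J4gens 0 0 0 0 s 0"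
  shows "pairing (extra_functional_x5 s) g = 0"
proof -
  obtain a b c d where l: "labelling a b c d" and g: "g = Jgen1 0 0 0 0 s 0 a b c d
      \<or> g = Jgen2 0 0 0 0 s 0 a b c d \<or> g = Jgen3 0 0 0 0 s 0 a b c d
      \<or> g = Jgen4 0 0 0 0 s 0 a b c d \<or> g = Jgen5 0 0 0 0 s 0 a b c d"
    using g by (rule J4gens_cases)
  from g show ?thesis using labelling_distinct[OF l]
    by (elim disjE) (auto simp: Jgen_defs extra_functional_x5_def labelling_iff s)
qed

theorem not_regular_x5:
  assumes s: "(s::'a::field) * s = 1" shows "\<not> regular_arity4 0 0 0 0 s 0"
proof (rule not_regular_if_extra_functional[where nfw=nfw5 and nfc="nfc5 s" and t'="S3 1 2 3 4"
      and k="extra_functional_x5 s"])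
  show "S3 1 2 3 4 \<in> basis4" by (simp add: labelling_iff)
  show "extra_functional_x5 s (comb (word4 \<tau>)) = 0" for \<tau>
    by (simp add: extra_functional_x5_def comb_def)
qed (simp_all add: nf5_comb nf_coeff_x5_vanishes extra_functional_x5_vanishes[OF s]
    extra_functional_x5_def)

section \<open>Nonzero sixth coordinate\<close>

lemma S2_to_comb_x6:
  assumes l: "labelling a b c d"
  shows "unitv (S2 a b c d) - fscale (s*s) (unitv (S5 d a c b)) \<in> J4 0 0 0 0 0 s"
  using labelling_permute[OF l]
  by (intro J4_combine[OF J4_relations_x6(4)[OF l] J4_relations_x6(2)[of d b c a], where c=s])
    (simp_all add: fun_eq_iff algebra_simps)

lemma comb_in_J4_x6:
  assumes s: "s \<noteq> 0" "s * s \<noteq> 1" and l: "labelling a b c d"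
  shows "unitv (S5 a b c d) \<in> J4 0 0 0 0 0 s"
proof -
  have l': "labelling c d b a" "labelling b d c a" using labelling_permute[OF l] by blast+
  have "unitv (S1 c d b a) - fscale (s*s*s) (unitv (S5 a b c d)) \<in> J4 0 0 0 0 0 s"
    by (rule J4_combine[OF J4_relations_x6(1)[OF l'(1)] S2_to_comb_x6[OF l'(2)], where c=s])
      (simp add: fun_eq_iff algebra_simps)
  then have diff: "fscale (s*s*s - s) (unitv (S5 a b c d)) \<in> J4 0 0 0 0 0 s"
    by (rule J4_combine[OF J4_relations_x6(3)[OF l'(1)], where c="-1"]) (simp add: fun_eq_iff algebra_simps)
  have "s * (s*s - 1) \<noteq> 0" using s by simp
  then have "s*s*s - s \<noteq> 0" by (simp add: algebra_simps)
  then show ?thesis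
    by (intro J4_scale[OF diff, where c="inverse (s*s*s - s)"]) (simp add: fun_eq_iff)
qed

lemma not_balanced_in_J4_x6:
  assumes s: "s \<noteq> 0" "s * s \<noteq> 1" and l: "labelling a b c d"
  shows "unitv (S1 a b c d) \<in> J4 0 0 0 0 0 s"
    and "unitv (S2 a b c d) \<in> J4 0 0 0 0 0 s"
    and "unitv (S4 a b c d) \<in> J4 0 0 0 0 0 s"
    and "unitv (S5 a b c d) \<in> J4 0 0 0 0 0 s"
proof -
  have S5: "unitv (S5 a b c d) \<in> J4 0 0 0 0 0 s" if "labelling a b c d" for a b c d
    using comb_in_J4_x6[OF s that] .
  have S4: "unitv (S4 a b c d) \<in> J4 0 0 0 0 0 s" if l: "labelling a b c d" for a b c d
    using labelling_permute[OF l]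
    by (intro J4_combine[OF J4_relations_x6(2)[OF l] S5[of a d c b], where c=s]) (simp_all add: fun_eq_iff)
  show "unitv (S1 a b c d) \<in> J4 0 0 0 0 0 s"
    using labelling_permute[OF l]
    by (intro J4_combine[OF J4_relations_x6(3)[OF l] S5[of d c a b], where c=s]) (simp_all add: fun_eq_iff)
  show "unitv (S2 a b c d) \<in> J4 0 0 0 0 0 s"
    using labelling_permute[OF l]
    by (intro J4_combine[OF J4_relations_x6(4)[OF l] S4[of d b c a], where c=s]) (simp_all add: fun_eq_iff)
  show "unitv (S4 a b c d) \<in> J4 0 0 0 0 0 s" "unitv (S5 a b c d) \<in> J4 0 0 0 0 0 s"
    using S4[OF l] S5[OF l] .
qed

definition balanced_from_1 :: "tree set" where
  "balanced_from_1 = {S3 1 b c d |b c d. labelling 1 b c d}"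

lemma balanced_from_1_small: "finite balanced_from_1" "card balanced_from_1 < 24"
proof -
  let ?L = "{S3 a b c d |a b c d. labelling a b c d}"
  have sub: "balanced_from_1 \<subseteq> ?L - {S3 2 1 3 4}" unfolding balanced_from_1_def by auto
  have fin: "finite ?L" and card: "card ?L \<le> 24" by (rule card_labelled_le)+
  have "labelling 2 1 3 4" by (simp add: labelling_iff)
  then have mem: "S3 2 1 3 4 \<in> ?L" by blast
  show "finite balanced_from_1" using finite_subset[OF sub] fin by blast
  have "card balanced_from_1 \<le> card (?L - {S3 2 1 3 4})" using card_mono[OF _ sub] fin by blast
  also have "\<dots> = card ?L - 1" using mem fin by (simp add: card_Diff_singleton)
  also have "\<dots> < 24" using card card_gt_0_iff[of ?L] mem fin by linarith
  finally show "card balanced_from_1 < 24" .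
qed

text \<open>Each balanced monomial (ab)(cd) is proportional to the one among (ab)(cd), (ba)(dc), (cd)(ba),
  (dc)(ab) whose first label is 1.\<close>

lemma balanced_reduces_x6:
  assumes l: "labelling a b c d"
  shows "reduces_to (J4 0 0 0 0 0 s) balanced_from_1 (S3 a b c d)"
proof -
  have l': "labelling c d b a" "labelling b a d c" "labelling d c a b" using labelling_permute[OF l] by blast+
  note r = J4_relations_x6(5)[OF l, of s] J4_relations_x6(5)[OF l'(1), of s] J4_relations_x6(5)[OF l'(2), of s]
  have r2: "unitv (S3 a b c d) - fscale (s*s) (unitv (S3 b a d c)) \<in> J4 0 0 0 0 0 s"
    by (rule J4_combine[OF r(1) r(2), where c=s]) (simp add: fun_eq_iff algebra_simps)
  have r3: "unitv (S3 a b c d) - fscale (s*s*s) (unitv (S3 d c a b)) \<in> J4 0 0 0 0 0 s"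
    by (rule J4_combine[OF r2 r(3), where c="s*s"]) (simp add: fun_eq_iff algebra_simps)
  have "a = 1 \<or> b = 1 \<or> c = 1 \<or> d = 1" using l unfolding labelling_def by auto
  then show ?thesis
  proof (elim disjE)
    assume "a = 1" then show ?thesis
      using l by (intro reduces_to_self) (auto simp: balanced_from_1_def)
  next
    assume "b = 1" then show ?thesis
      using l'(2) by (intro reduces_to_step[OF r2] reduces_to_self) (auto simp: balanced_from_1_def)
  next
    assume "c = 1" then show ?thesis
      using l'(1) by (intro reduces_to_step[OF r(1)] reduces_to_self) (auto simp: balanced_from_1_def)
  next
    assume "d = 1" then show ?thesis
      using l'(3) by (intro reduces_to_step[OF r3] reduces_to_self) (auto simp: balanced_from_1_def)
  qed
qed

lemma reduces_to_balanced_from_1_x6: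
  assumes s: "s \<noteq> 0" "s * s \<noteq> 1" and t: "t \<in> basis4"
  shows "reduces_to (J4 0 0 0 0 0 s) balanced_from_1 t"
proof -
  have "S3 1 2 3 4 \<in> balanced_from_1" by (force simp: balanced_from_1_def labelling_iff)
  note reduces = reduces_to_if_in_J4[OF _ this]
  note in_J4 = not_balanced_in_J4_x6[OF s]
  from t show ?thesis
  proof (cases rule: basis4_cases)
    case (1 a b c d) then show ?thesis using reduces[OF in_J4(1)[OF 1(1)]] by simp
  next
    case (2 a b c d) then show ?thesis using reduces[OF in_J4(2)[OF 2(1)]] by simp
  next
    case (3 a b c d) then show ?thesis using balanced_reduces_x6 by simp
  next
    case (4 a b c d) then show ?thesis using reduces[OF in_J4(3)[OF 4(1)]] by simp
  next
    case (5 a b c d) then show ?thesis using reduces[OF in_J4(4)[OF 5(1)]] by simp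
  qed
qed

fun nfw6 :: "tree \<Rightarrow> nat list" where
  "nfw6 (Node (Node (Node (Leaf a) (Leaf b)) (Leaf c)) (Leaf d)) = [d,c,a,b]"
| "nfw6 (Node (Node (Leaf a) (Node (Leaf b) (Leaf c))) (Leaf d)) = [d,a,c,b]"
| "nfw6 (Node (Node (Leaf a) (Leaf b)) (Node (Leaf c) (Leaf d))) = [a,b,c,d]"
| "nfw6 (Node (Leaf a) (Node (Node (Leaf b) (Leaf c)) (Leaf d))) = [a,d,c,b]"
| "nfw6 (Node (Leaf a) (Node (Leaf b) (Node (Leaf c) (Leaf d)))) = [a,b,c,d]"
| "nfw6 _ = []"

fun nfc6 :: "'a::field \<Rightarrow> tree \<Rightarrow> 'a" where
  "nfc6 s (Node (Node (Node (Leaf a) (Leaf b)) (Leaf c)) (Leaf d)) = s"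
| "nfc6 s (Node (Node (Leaf a) (Node (Leaf b) (Leaf c))) (Leaf d)) = s * s"
| "nfc6 s (Node (Node (Leaf a) (Leaf b)) (Node (Leaf c) (Leaf d))) = 0"
| "nfc6 s (Node (Leaf a) (Node (Node (Leaf b) (Leaf c)) (Leaf d))) = s"
| "nfc6 s (Node (Leaf a) (Node (Leaf b) (Node (Leaf c) (Leaf d)))) = 1"
| "nfc6 s _ = 0"

lemma square_eq_1_consequences:
  "(s::'a::field) * s = 1 \<Longrightarrow> s * (s * s) = s \<and> s * (s * (s * s)) = 1 \<and> s * s * s = s"
  by (metis mult.assoc mult.right_neutral)

lemma nf_coeff_x6_vanishes:
  assumes s: "s * s = 1" and g: "g \<in> J4gens 0 0 0 0 0 s"
  shows "pairing (nf_coeff nfw6 (nfc6 s) \<tau>) g = 0"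
proof -
  obtain a b c d where l: "labelling a b c d" and g: "g = Jgen1 0 0 0 0 0 s a b c d
      \<or> g = Jgen2 0 0 0 0 0 s a b c d \<or> g = Jgen3 0 0 0 0 0 s a b c d
      \<or> g = Jgen4 0 0 0 0 0 s a b c d \<or> g = Jgen5 0 0 0 0 0 s a b c d"
    using g by (rule J4gens_cases)
  from g show ?thesis using labelling_distinct[OF l] square_eq_1_consequences[OF s]
    by (elim disjE) (simp_all add: Jgen_defs nf_coeff_def labelling_iff)
qed

lemma nf6_comb: "nfw6 (comb (word4 \<tau>)) = word4 \<tau> \<and> nfc6 s (comb (word4 \<tau>)) = 1"
  by (simp add: comb_def word4_def)

text \<open>For s = \<plusminus>1 the orbit of (12)(34) under (ab)(cd) \<mapsto> (cd)(ba) carries a further functional.\<close>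

definition extra_functional_x6 :: "'a::field \<Rightarrow> tree \<Rightarrow> 'a" where
  "extra_functional_x6 s t = (if t = S3 1 2 3 4 then 1 else if t = S3 3 4 2 1 then s
     else if t = S3 2 1 4 3 then s * s else if t = S3 4 3 1 2 then s * s * s else 0)"

lemma extra_functional_x6_vanishes:
  assumes s: "s * s = 1" and g: "g \<in> J4gens 0 0 0 0 0 s"
  shows "pairing (extra_functional_x6 s) g = 0"
proof -
  obtain a b c d where l: "labelling a b c d" and g: "g = Jgen1 0 0 0 0 0 s a b c d
      \<or> g = Jgen2 0 0 0 0 0 s a b c d \<or> g = Jgen3 0 0 0 0 0 s a b c d
      \<or> g = Jgen4 0 0 0 0 0 s a b c d \<or> g = Jgen5 0 0 0 0 0 s a b c d"
    using g by (rule J4gens_cases)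
  from g show ?thesis using labelling_distinct[OF l] square_eq_1_consequences[OF s]
    by (elim disjE) (auto simp: Jgen_defs extra_functional_x6_def labelling_iff s)
qed

theorem not_regular_x6:
  assumes s: "(s::'a::field) \<noteq> 0" shows "\<not> regular_arity4 0 0 0 0 0 s"
proof (cases "s * s = 1")
  case False
  show ?thesis
    by (rule not_regular_if_few_monomials_suffice[OF balanced_from_1_small(1) _
          balanced_from_1_small(2) reduces_to_balanced_from_1_x6[OF s False]])
      (auto simp: balanced_from_1_def)
next
  case True
  show ?thesis
  proof (rule not_regular_if_extra_functional[where nfw=nfw6 and nfc="nfc6 s" and t'="S3 1 2 3 4"
        and k="extra_functional_x6 s"])
    show "S3 1 2 3 4 \<in> basis4" by (simp add: labelling_iff)
    show "extra_functional_x6 s (comb (word4 \<tau>)) = 0" for \<tau>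
      by (simp add: extra_functional_x6_def comb_def)
  qed (simp_all add: nf6_comb nf_coeff_x6_vanishes[OF True] extra_functional_x6_vanishes[OF True]
      extra_functional_x6_def)
qed

lemma at_most_one_nonzero_cases:
  assumes "length (filter (\<lambda>c. c \<noteq> 0) [x1, x2, x3, x4, x5, x6]) \<le> 1"
  obtains (x1) "x1 \<noteq> 0" "x2 = 0" "x3 = 0" "x4 = 0" "x5 = 0" "x6 = 0"
    | (x2) "x2 \<noteq> 0" "x1 = 0" "x3 = 0" "x4 = 0" "x5 = 0" "x6 = 0"
    | (x3) "x3 \<noteq> 0" "x1 = 0" "x2 = 0" "x4 = 0" "x5 = 0" "x6 = 0"
    | (x4) "x4 \<noteq> 0" "x1 = 0" "x2 = 0" "x3 = 0" "x5 = 0" "x6 = 0"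
    | (x5) "x1 = 0" "x2 = 0" "x3 = 0" "x4 = 0" "x6 = 0"
    | (x6) "x6 \<noteq> 0" "x1 = 0" "x2 = 0" "x3 = 0" "x4 = 0" "x5 = 0"
  using assms
  by (cases "x1 = 0"; cases "x2 = 0"; cases "x3 = 0"; cases "x4 = 0"; cases "x5 = 0"; cases "x6 = 0")
    (simp_all add: that)

theorem mainTheorem9:
  fixes x1 x2 x3 x4 x5 x6 :: "'a::field_char_0"
  assumes "length (filter (\<lambda>c. c \<noteq> 0) [x1, x2, x3, x4, x5, x6]) \<le> 1"
  shows "regular_arity4 x1 x2 x3 x4 x5 x6 \<longleftrightarrow>
    ((x1, x2, x3, x4, x5, x6) = (1, 0, 0, 0, 0, 0) \<or>
     (\<exists>s. (x1, x2, x3, x4, x5, x6) = (0, 0, 0, 0, s, 0) \<and> s \<noteq> 1 \<and> s \<noteq> -1))"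
  using assms
proof (cases rule: at_most_one_nonzero_cases)
  case x1 then show ?thesis using regular_x1 not_regular_x1[of x1] by (cases "x1 = 1") auto
next
  case x2 then show ?thesis using not_regular_x2[of x2] by simp
next
  case x3 then show ?thesis using not_regular_x3[of x3] by simp
next
  case x4 then show ?thesis using not_regular_x4[of x4] by simp
next
  case x5 then show ?thesis using regular_x5[of x5] not_regular_x5[of x5] square_eq_1_iff[of x5] by auto
next
  case x6 then show ?thesis using not_regular_x6[of x6] by simp
qed

end
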